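(* Let $(F,\phi):\mathcal A\to\mathcal B$, $(K,\kappa):\mathcal A\to\mathcal D$, $(G,\gamma):\mathcal B\to\mathcal C$, $(H,\eta):\mathcal D\to\mathcal C$ be morphisms of bigroupoids with $(G,\gamma)\circ(F,\phi)=(H,\eta)\circ(K,\kappa)$, where $K$ is a trivial cofibration which is surjective on 0-cells and $G$ is a fibration. Then there is a morphism $(L,\lambda):\mathcal D\to\mathcal B$ with $(L,\lambda)\circ(K,\kappa)=(F,\phi)$ and $(G,\gamma)\circ(L,\lambda)=(H,\eta)$.
   Context: A bigroupoid $\mathcal B$ consists of: a set $\mathcal B_0$ of 0-cells; for each $A,B\in\mathcal B_0$ a groupoid $\mathcal B(A,B)$ whose objects are 1-cells and whose arrows are 2-cells; composition functors $*$; identity 1-cells $1_A$; inversion functors $(-)^*$; and natural isomorphisms $\mathbf a:(h*g)*f\Rightarrow h*(g*f)$, $\mathbf l:1_B*f\Rightarrow f$, $\mathbf r:f*1_A\Rightarrow f$, $\mathbf e:f^**f\Rightarrow 1_A$, $\mathbf i:1_B\Rightarrow f*f^*$, such that the pentagon for $\mathbf a$ commutes, $(\mathrm{id}*\mathbf l)\circ\mathbf a=\mathbf r*\mathrm{id}$, and $\mathbf r_f\circ(\mathrm{id}*\mathbf e_f)\circ\mathbf a\circ(\mathbf i_f*\mathrm{id})=\mathbf l_f$. A morphism $(F,\phi):\mathcal A\to\mathcal B$ consists of a function on 0-cells, functors $F_{A,A'}:\mathcal A(A,A')\to\mathcal B(FA,FA')$ and natural isomorphisms $\phi_{g,f}:Fg*Ff\Rightarrow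 F(g*f)$, $\phi_A:1_{FA}\Rightarrow F1_A$, $\phi_f:(Ff)^*\Rightarrow F(f^* )$ satisfying $F\mathbf a\circ\phi\circ(\phi*\mathrm{id})=\phi\circ(\mathrm{id}*\phi)\circ\mathbf a$, $F\mathbf r\circ\phi\circ(\mathrm{id}*\phi_A)=\mathbf r$, $F\mathbf l\circ\phi\circ(\phi_B*\mathrm{id})=\mathbf l$, $F\mathbf e\circ\phi\circ(\phi_f*\mathrm{id})=\phi_A\circ\mathbf e$, $F\mathbf i\circ\phi_B=\phi\circ(\mathrm{id}*\phi_f)\circ\mathbf i$; composition is $(G,\gamma)\circ(F,\phi)=(GF,G\phi\circ\gamma F)$. Fibration: (1) for every 0-cell $A'$ of $\mathcal A$ and 1-cell $b:B\to FA'$ there is $a:A\to A'$ with $FA=B$, $Fa=b$; (2) for every 1-cell $a'$ and 2-cell $\beta:b\Rightarrow Fa'$ there is $\alpha:a\Rightarrow a'$ with $Fa=b$, $F\alpha=\beta$. Cofibration: injective on 0-cells and each $F_{A,A'}$ injective on objects. Weak equivalence: every 0-cell $B$ of the codomain admits a 1-cell $B\to FA'$ for some 0-cell $A'$, and each $F_{A,A'}$ is an equivalence of categories. A trivial cofibration is a cofibration that is a weak equivalence. *)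

theory Defs
  imports Main
begin

text \<open>The hom-groupoid
  B(X,Y) consists of the 1-cells f with src1 f = X, tgt1 f = Y and the 2-cells
  between them.  vcomp b a is vertical composition (b after a), vid the identity
  2-cell, hcomp1 g f = g * f and hcomp2 the composition functor on 2-cells,
  unit1 X = 1_X, inv1/inv2 the inversion functor, and assoc, lunit, runit,
  ecell, icell the structural isomorphisms a, l, r, e, i.\<close>

record ('o,'a,'c) bigroupoid =
  obj :: "'o set"
  arr1 :: "'a set"
  src1 :: "'a \<Rightarrow> 'o"
  tgt1 :: "'a \<Rightarrow> 'o"
  arr2 :: "'c set"
  dom2 :: "'c \<Rightarrow> 'a"
  cod2 :: "'c \<Rightarrow> 'a"
  vcomp :: "'c \<Rightarrow> 'c \<Rightarrow> 'c"
  vid :: "'a \<Rightarrow> 'c"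
  hcomp1 :: "'a \<Rightarrow> 'a \<Rightarrow> 'a"
  hcomp2 :: "'c \<Rightarrow> 'c \<Rightarrow> 'c"
  unit1 :: "'o \<Rightarrow> 'a"
  inv1 :: "'a \<Rightarrow> 'a"
  inv2 :: "'c \<Rightarrow> 'c"
  assoc :: "'a \<Rightarrow> 'a \<Rightarrow> 'a \<Rightarrow> 'c"
  lunit :: "'a \<Rightarrow> 'c"
  runit :: "'a \<Rightarrow> 'c"
  ecell :: "'a \<Rightarrow> 'c"
  icell :: "'a \<Rightarrow> 'c"

definition cell :: "('o,'a,'c,'z) bigroupoid_scheme \<Rightarrow> 'c \<Rightarrow> 'a \<Rightarrow> 'a \<Rightarrow> bool" where
  "cell B \<alpha> f g \<longleftrightarrow> \<alpha> \<in> arr2 B \<and> dom2 B \<alpha> = f \<and> cod2 B \<alpha> = g"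

definition bigroupoid :: "('o,'a,'c,'z) bigroupoid_scheme \<Rightarrow> bool" where
  "bigroupoid B \<longleftrightarrow>
   \<comment> \<open>typing of 1-cells and 2-cells\<close>
   (\<forall>f\<in>arr1 B. src1 B f \<in> obj B \<and> tgt1 B f \<in> obj B) \<and>
   (\<forall>\<alpha>\<in>arr2 B. dom2 B \<alpha> \<in> arr1 B \<and> cod2 B \<alpha> \<in> arr1 B \<and>
        src1 B (dom2 B \<alpha>) = src1 B (cod2 B \<alpha>) \<and> tgt1 B (dom2 B \<alpha>) = tgt1 B (cod2 B \<alpha>)) \<and>
   \<comment> \<open>each B(X,Y) is a category\<close>
   (\<forall>\<alpha>\<in>arr2 B. \<forall>\<beta>\<in>arr2 B. cod2 B \<alpha> = dom2 B \<beta> \<longrightarrow>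
        cell B (vcomp B \<beta> \<alpha>) (dom2 B \<alpha>) (cod2 B \<beta>)) \<and>
   (\<forall>f\<in>arr1 B. cell B (vid B f) f f) \<and>
   (\<forall>\<alpha>\<in>arr2 B. \<forall>\<beta>\<in>arr2 B. \<forall>\<gamma>\<in>arr2 B. cod2 B \<alpha> = dom2 B \<beta> \<longrightarrow> cod2 B \<beta> = dom2 B \<gamma> \<longrightarrow>
        vcomp B \<gamma> (vcomp B \<beta> \<alpha>) = vcomp B (vcomp B \<gamma> \<beta>) \<alpha>) \<and>
   (\<forall>\<alpha>\<in>arr2 B. vcomp B \<alpha> (vid B (dom2 B \<alpha>)) = \<alpha> \<and> vcomp B (vid B (cod2 B \<alpha>)) \<alpha> = \<alpha>) \<and>
   \<comment> \<open>... and a groupoid\<close>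
   (\<forall>\<alpha>\<in>arr2 B. \<exists>\<beta>. cell B \<beta> (cod2 B \<alpha>) (dom2 B \<alpha>) \<and>
        vcomp B \<beta> \<alpha> = vid B (dom2 B \<alpha>) \<and> vcomp B \<alpha> \<beta> = vid B (cod2 B \<alpha>)) \<and>
   \<comment> \<open>composition functors\<close>
   (\<forall>f\<in>arr1 B. \<forall>g\<in>arr1 B. src1 B g = tgt1 B f \<longrightarrow>
        hcomp1 B g f \<in> arr1 B \<and> src1 B (hcomp1 B g f) = src1 B f \<and> tgt1 B (hcomp1 B g f) = tgt1 B g) \<and>
   (\<forall>\<alpha>\<in>arr2 B. \<forall>\<beta>\<in>arr2 B. src1 B (dom2 B \<beta>) = tgt1 B (dom2 B \<alpha>) \<longrightarrow>
        cell B (hcomp2 B \<beta> \<alpha>) (hcomp1 B (dom2 B \<beta>) (dom2 B \<alpha>)) (hcomp1 B (cod2 B \<beta>) (cod2 B \<alpha>))) \<and>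
   (\<forall>f\<in>arr1 B. \<forall>g\<in>arr1 B. src1 B g = tgt1 B f \<longrightarrow>
        hcomp2 B (vid B g) (vid B f) = vid B (hcomp1 B g f)) \<and>
   (\<forall>\<alpha>\<in>arr2 B. \<forall>\<alpha>'\<in>arr2 B. \<forall>\<beta>\<in>arr2 B. \<forall>\<beta>'\<in>arr2 B.
        cod2 B \<alpha> = dom2 B \<alpha>' \<longrightarrow> cod2 B \<beta> = dom2 B \<beta>' \<longrightarrow> src1 B (dom2 B \<beta>) = tgt1 B (dom2 B \<alpha>) \<longrightarrow>
        hcomp2 B (vcomp B \<beta>' \<beta>) (vcomp B \<alpha>' \<alpha>) = vcomp B (hcomp2 B \<beta>' \<alpha>') (hcomp2 B \<beta> \<alpha>)) \<and>
   \<comment> \<open>identity 1-cells\<close>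
   (\<forall>X\<in>obj B. unit1 B X \<in> arr1 B \<and> src1 B (unit1 B X) = X \<and> tgt1 B (unit1 B X) = X) \<and>
   \<comment> \<open>inversion functors B(X,Y) \<rightarrow> B(Y,X)\<close>
   (\<forall>f\<in>arr1 B. inv1 B f \<in> arr1 B \<and> src1 B (inv1 B f) = tgt1 B f \<and> tgt1 B (inv1 B f) = src1 B f) \<and>
   (\<forall>\<alpha>\<in>arr2 B. cell B (inv2 B \<alpha>) (inv1 B (dom2 B \<alpha>)) (inv1 B (cod2 B \<alpha>))) \<and>
   (\<forall>f\<in>arr1 B. inv2 B (vid B f) = vid B (inv1 B f)) \<and>
   (\<forall>\<alpha>\<in>arr2 B. \<forall>\<beta>\<in>arr2 B. cod2 B \<alpha> = dom2 B \<beta> \<longrightarrow>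
        inv2 B (vcomp B \<beta> \<alpha>) = vcomp B (inv2 B \<beta>) (inv2 B \<alpha>)) \<and>
   \<comment> \<open>associator: (h*g)*f \<Rightarrow> h*(g*f), natural\<close>
   (\<forall>f\<in>arr1 B. \<forall>g\<in>arr1 B. \<forall>h\<in>arr1 B. src1 B g = tgt1 B f \<longrightarrow> src1 B h = tgt1 B g \<longrightarrow>
        cell B (assoc B h g f) (hcomp1 B (hcomp1 B h g) f) (hcomp1 B h (hcomp1 B g f))) \<and>
   (\<forall>\<alpha>\<in>arr2 B. \<forall>\<beta>\<in>arr2 B. \<forall>\<gamma>\<in>arr2 B.
        src1 B (dom2 B \<beta>) = tgt1 B (dom2 B \<alpha>) \<longrightarrow> src1 B (dom2 B \<gamma>) = tgt1 B (dom2 B \<beta>) \<longrightarrow>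
        vcomp B (assoc B (cod2 B \<gamma>) (cod2 B \<beta>) (cod2 B \<alpha>)) (hcomp2 B (hcomp2 B \<gamma> \<beta>) \<alpha>) =
        vcomp B (hcomp2 B \<gamma> (hcomp2 B \<beta> \<alpha>)) (assoc B (dom2 B \<gamma>) (dom2 B \<beta>) (dom2 B \<alpha>))) \<and>
   \<comment> \<open>left unitor 1_Y * f \<Rightarrow> f, natural\<close>
   (\<forall>f\<in>arr1 B. cell B (lunit B f) (hcomp1 B (unit1 B (tgt1 B f)) f) f) \<and>
   (\<forall>\<alpha>\<in>arr2 B. vcomp B (lunit B (cod2 B \<alpha>)) (hcomp2 B (vid B (unit1 B (tgt1 B (dom2 B \<alpha>)))) \<alpha>) =
        vcomp B \<alpha> (lunit B (dom2 B \<alpha>))) \<and>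
   \<comment> \<open>right unitor f * 1_X \<Rightarrow> f, natural\<close>
   (\<forall>f\<in>arr1 B. cell B (runit B f) (hcomp1 B f (unit1 B (src1 B f))) f) \<and>
   (\<forall>\<alpha>\<in>arr2 B. vcomp B (runit B (cod2 B \<alpha>)) (hcomp2 B \<alpha> (vid B (unit1 B (src1 B (dom2 B \<alpha>))))) =
        vcomp B \<alpha> (runit B (dom2 B \<alpha>))) \<and>
   \<comment> \<open>e: f^* * f \<Rightarrow> 1_X, natural\<close>
   (\<forall>f\<in>arr1 B. cell B (ecell B f) (hcomp1 B (inv1 B f) f) (unit1 B (src1 B f))) \<and>
   (\<forall>\<alpha>\<in>arr2 B. vcomp B (ecell B (cod2 B \<alpha>)) (hcomp2 B (inv2 B \<alpha>) \<alpha>) =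
        vcomp B (vid B (unit1 B (src1 B (dom2 B \<alpha>)))) (ecell B (dom2 B \<alpha>))) \<and>
   \<comment> \<open>i: 1_Y \<Rightarrow> f * f^*, natural\<close>
   (\<forall>f\<in>arr1 B. cell B (icell B f) (unit1 B (tgt1 B f)) (hcomp1 B f (inv1 B f))) \<and>
   (\<forall>\<alpha>\<in>arr2 B. vcomp B (icell B (cod2 B \<alpha>)) (vid B (unit1 B (tgt1 B (dom2 B \<alpha>)))) =
        vcomp B (hcomp2 B \<alpha> (inv2 B \<alpha>)) (icell B (dom2 B \<alpha>))) \<and>
   \<comment> \<open>pentagon\<close>
   (\<forall>f\<in>arr1 B. \<forall>g\<in>arr1 B. \<forall>h\<in>arr1 B. \<forall>k\<in>arr1 B.
        src1 B g = tgt1 B f \<longrightarrow> src1 B h = tgt1 B g \<longrightarrow> src1 B k = tgt1 B h \<longrightarrow>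
        vcomp B (assoc B k h (hcomp1 B g f)) (assoc B (hcomp1 B k h) g f) =
        vcomp B (hcomp2 B (vid B k) (assoc B h g f))
          (vcomp B (assoc B k (hcomp1 B h g) f) (hcomp2 B (assoc B k h g) (vid B f)))) \<and>
   \<comment> \<open>(id * l) o a = r * id\<close>
   (\<forall>f\<in>arr1 B. \<forall>g\<in>arr1 B. src1 B g = tgt1 B f \<longrightarrow>
        vcomp B (hcomp2 B (vid B g) (lunit B f)) (assoc B g (unit1 B (tgt1 B f)) f) =
        hcomp2 B (runit B g) (vid B f)) \<and>
   \<comment> \<open>r o (id * e) o a o (i * id) = l\<close>
   (\<forall>f\<in>arr1 B.
        vcomp B (runit B f) (vcomp B (hcomp2 B (vid B f) (ecell B f))
          (vcomp B (assoc B f (inv1 B f) f) (hcomp2 B (icell B f) (vid B f)))) = lunit B f)"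

text \<open>fmap0/fmap1/fmap2 act on 0-, 1-, 2-cells (since hom-groupoids are disjoint,
  one function fmap1/fmap2 encodes the family of functors F_{A,A'}); fcmp g f = phi_{g,f},
  funit A = phi_A, finv f = phi_f.\<close>

record ('o,'a,'c,'p,'b,'d) bimorph =
  fmap0 :: "'o \<Rightarrow> 'p"
  fmap1 :: "'a \<Rightarrow> 'b"
  fmap2 :: "'c \<Rightarrow> 'd"
  fcmp :: "'a \<Rightarrow> 'a \<Rightarrow> 'd"
  funit :: "'o \<Rightarrow> 'd"
  finv :: "'a \<Rightarrow> 'd"

definition bimorphism ::
  "('o,'a,'c,'z) bigroupoid_scheme \<Rightarrow> ('p,'b,'d,'y) bigroupoid_scheme \<Rightarrow>
   ('o,'a,'c,'p,'b,'d) bimorph \<Rightarrow> bool" where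
  "bimorphism A B F \<longleftrightarrow>
   bigroupoid A \<and> bigroupoid B \<and>
   (\<forall>X\<in>obj A. fmap0 F X \<in> obj B) \<and>
   (\<forall>f\<in>arr1 A. fmap1 F f \<in> arr1 B \<and> src1 B (fmap1 F f) = fmap0 F (src1 A f) \<and>
        tgt1 B (fmap1 F f) = fmap0 F (tgt1 A f)) \<and>
   (\<forall>\<alpha>\<in>arr2 A. cell B (fmap2 F \<alpha>) (fmap1 F (dom2 A \<alpha>)) (fmap1 F (cod2 A \<alpha>))) \<and>
   (\<forall>f\<in>arr1 A. fmap2 F (vid A f) = vid B (fmap1 F f)) \<and>
   (\<forall>\<alpha>\<in>arr2 A. \<forall>\<beta>\<in>arr2 A. cod2 A \<alpha> = dom2 A \<beta> \<longrightarrow>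
        fmap2 F (vcomp A \<beta> \<alpha>) = vcomp B (fmap2 F \<beta>) (fmap2 F \<alpha>)) \<and>
   \<comment> \<open>phi_{g,f} : Fg * Ff \<Rightarrow> F(g*f), natural\<close>
   (\<forall>f\<in>arr1 A. \<forall>g\<in>arr1 A. src1 A g = tgt1 A f \<longrightarrow>
        cell B (fcmp F g f) (hcomp1 B (fmap1 F g) (fmap1 F f)) (fmap1 F (hcomp1 A g f))) \<and>
   (\<forall>\<alpha>\<in>arr2 A. \<forall>\<beta>\<in>arr2 A. src1 A (dom2 A \<beta>) = tgt1 A (dom2 A \<alpha>) \<longrightarrow>
        vcomp B (fcmp F (cod2 A \<beta>) (cod2 A \<alpha>)) (hcomp2 B (fmap2 F \<beta>) (fmap2 F \<alpha>)) =
        vcomp B (fmap2 F (hcomp2 A \<beta> \<alpha>)) (fcmp F (dom2 A \<beta>) (dom2 A \<alpha>))) \<and>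
   \<comment> \<open>phi_X : 1_{FX} \<Rightarrow> F 1_X\<close>
   (\<forall>X\<in>obj A. cell B (funit F X) (unit1 B (fmap0 F X)) (fmap1 F (unit1 A X))) \<and>
   \<comment> \<open>phi_f : (Ff)^* \<Rightarrow> F(f^*), natural\<close>
   (\<forall>f\<in>arr1 A. cell B (finv F f) (inv1 B (fmap1 F f)) (fmap1 F (inv1 A f))) \<and>
   (\<forall>\<alpha>\<in>arr2 A. vcomp B (finv F (cod2 A \<alpha>)) (inv2 B (fmap2 F \<alpha>)) =
        vcomp B (fmap2 F (inv2 A \<alpha>)) (finv F (dom2 A \<alpha>))) \<and>
   \<comment> \<open>F a o phi o (phi * id) = phi o (id * phi) o a\<close>
   (\<forall>f\<in>arr1 A. \<forall>g\<in>arr1 A. \<forall>h\<in>arr1 A. src1 A g = tgt1 A f \<longrightarrow> src1 A h = tgt1 A g \<longrightarrow>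
        vcomp B (fmap2 F (assoc A h g f))
          (vcomp B (fcmp F (hcomp1 A h g) f) (hcomp2 B (fcmp F h g) (vid B (fmap1 F f)))) =
        vcomp B (fcmp F h (hcomp1 A g f))
          (vcomp B (hcomp2 B (vid B (fmap1 F h)) (fcmp F g f))
            (assoc B (fmap1 F h) (fmap1 F g) (fmap1 F f)))) \<and>
   \<comment> \<open>F r o phi o (id * phi_X) = r\<close>
   (\<forall>f\<in>arr1 A.
        vcomp B (fmap2 F (runit A f))
          (vcomp B (fcmp F f (unit1 A (src1 A f))) (hcomp2 B (vid B (fmap1 F f)) (funit F (src1 A f)))) =
        runit B (fmap1 F f)) \<and>
   \<comment> \<open>F l o phi o (phi_Y * id) = l\<close>
   (\<forall>f\<in>arr1 A.
        vcomp B (fmap2 F (lunit A f))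
          (vcomp B (fcmp F (unit1 A (tgt1 A f)) f) (hcomp2 B (funit F (tgt1 A f)) (vid B (fmap1 F f)))) =
        lunit B (fmap1 F f)) \<and>
   \<comment> \<open>F e o phi o (phi_f * id) = phi_X o e\<close>
   (\<forall>f\<in>arr1 A.
        vcomp B (fmap2 F (ecell A f))
          (vcomp B (fcmp F (inv1 A f) f) (hcomp2 B (finv F f) (vid B (fmap1 F f)))) =
        vcomp B (funit F (src1 A f)) (ecell B (fmap1 F f))) \<and>
   \<comment> \<open>F i o phi_Y = phi o (id * phi_f) o i\<close>
   (\<forall>f\<in>arr1 A.
        vcomp B (fmap2 F (icell A f)) (funit F (tgt1 A f)) =
        vcomp B (fcmp F f (inv1 A f))
          (vcomp B (hcomp2 B (vid B (fmap1 F f)) (finv F f)) (icell B (fmap1 F f))))"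

text \<open>Composition (G,gamma) o (F,phi) = (GF, G phi o gamma F); it needs the vertical
  composition of the codomain C.\<close>
definition bm_comp ::
  "('q,'e,'g,'x) bigroupoid_scheme \<Rightarrow> ('p,'b,'d,'q,'e,'g) bimorph \<Rightarrow>
   ('o,'a,'c,'p,'b,'d) bimorph \<Rightarrow> ('o,'a,'c,'q,'e,'g) bimorph" where
  "bm_comp C G F =
   \<lparr> fmap0 = fmap0 G \<circ> fmap0 F,
     fmap1 = fmap1 G \<circ> fmap1 F,
     fmap2 = fmap2 G \<circ> fmap2 F,
     fcmp = (\<lambda>g f. vcomp C (fmap2 G (fcmp F g f)) (fcmp G (fmap1 F g) (fmap1 F f))),
     funit = (\<lambda>X. vcomp C (fmap2 G (funit F X)) (funit G (fmap0 F X))),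
     finv = (\<lambda>f. vcomp C (fmap2 G (finv F f)) (finv G (fmap1 F f))) \<rparr>"

text \<open>Equality of morphisms with domain A: all data agree on the cells of A
  (HOL functions are unconstrained outside the carriers).\<close>
definition bm_eq ::
  "('o,'a,'c,'z) bigroupoid_scheme \<Rightarrow> ('o,'a,'c,'p,'b,'d) bimorph \<Rightarrow>
   ('o,'a,'c,'p,'b,'d) bimorph \<Rightarrow> bool" where
  "bm_eq A F F' \<longleftrightarrow>
   (\<forall>X\<in>obj A. fmap0 F X = fmap0 F' X) \<and>
   (\<forall>f\<in>arr1 A. fmap1 F f = fmap1 F' f) \<and>
   (\<forall>\<alpha>\<in>arr2 A. fmap2 F \<alpha> = fmap2 F' \<alpha>) \<and>
   (\<forall>f\<in>arr1 A. \<forall>g\<in>arr1 A. src1 A g = tgt1 A f \<longrightarrow> fcmp F g f = fcmp F' g f) \<and>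
   (\<forall>X\<in>obj A. funit F X = funit F' X) \<and>
   (\<forall>f\<in>arr1 A. finv F f = finv F' f)"

record ('x,'y) cat =
  cob :: "'x set"
  car :: "'y set"
  cdom :: "'y \<Rightarrow> 'x"
  ccod :: "'y \<Rightarrow> 'x"
  ccomp :: "'y \<Rightarrow> 'y \<Rightarrow> 'y"
  cid :: "'x \<Rightarrow> 'y"

definition cfunctor :: "('x,'y) cat \<Rightarrow> ('u,'v) cat \<Rightarrow> ('x \<Rightarrow> 'u) \<Rightarrow> ('y \<Rightarrow> 'v) \<Rightarrow> bool" where
  "cfunctor C D Fo Fa \<longleftrightarrow>
   (\<forall>x\<in>cob C. Fo x \<in> cob D) \<and>
   (\<forall>f\<in>car C. Fa f \<in> car D \<and> cdom D (Fa f) = Fo (cdom C f) \<and> ccod D (Fa f) = Fo (ccod C f)) \<and>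
   (\<forall>x\<in>cob C. Fa (cid C x) = cid D (Fo x)) \<and>
   (\<forall>f\<in>car C. \<forall>g\<in>car C. ccod C f = cdom C g \<longrightarrow> Fa (ccomp C g f) = ccomp D (Fa g) (Fa f))"

definition ciso :: "('x,'y) cat \<Rightarrow> 'y \<Rightarrow> bool" where
  "ciso C f \<longleftrightarrow> f \<in> car C \<and> (\<exists>g\<in>car C. cdom C g = ccod C f \<and> ccod C g = cdom C f \<and>
      ccomp C g f = cid C (cdom C f) \<and> ccomp C f g = cid C (ccod C f))"

definition cnat_iso :: "('x,'y) cat \<Rightarrow> ('u,'v) cat \<Rightarrow> ('x \<Rightarrow> 'u) \<Rightarrow> ('y \<Rightarrow> 'v) \<Rightarrow>
    ('x \<Rightarrow> 'u) \<Rightarrow> ('y \<Rightarrow> 'v) \<Rightarrow> ('x \<Rightarrow> 'v) \<Rightarrow> bool" where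
  "cnat_iso C D Fo Fa Go Ga \<tau> \<longleftrightarrow>
   (\<forall>x\<in>cob C. \<tau> x \<in> car D \<and> cdom D (\<tau> x) = Fo x \<and> ccod D (\<tau> x) = Go x \<and> ciso D (\<tau> x)) \<and>
   (\<forall>f\<in>car C. ccomp D (\<tau> (ccod C f)) (Fa f) = ccomp D (Ga f) (\<tau> (cdom C f)))"

definition cequivalence :: "('x,'y) cat \<Rightarrow> ('u,'v) cat \<Rightarrow> ('x \<Rightarrow> 'u) \<Rightarrow> ('y \<Rightarrow> 'v) \<Rightarrow> bool" where
  "cequivalence C D Fo Fa \<longleftrightarrow> cfunctor C D Fo Fa \<and>
   (\<exists>Go Ga \<eta> \<epsilon>. cfunctor D C Go Ga \<and>
      cnat_iso C C id id (Go \<circ> Fo) (Ga \<circ> Fa) \<eta> \<and>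
      cnat_iso D D (Fo \<circ> Go) (Fa \<circ> Ga) id id \<epsilon>)"

definition hom_cat :: "('o,'a,'c,'z) bigroupoid_scheme \<Rightarrow> 'o \<Rightarrow> 'o \<Rightarrow> ('a,'c) cat" where
  "hom_cat B X Y =
   \<lparr> cob = {f\<in>arr1 B. src1 B f = X \<and> tgt1 B f = Y},
     car = {\<alpha>\<in>arr2 B. src1 B (dom2 B \<alpha>) = X \<and> tgt1 B (dom2 B \<alpha>) = Y},
     cdom = dom2 B, ccod = cod2 B, ccomp = vcomp B, cid = vid B \<rparr>"

definition fibration ::
  "('o,'a,'c,'z) bigroupoid_scheme \<Rightarrow> ('p,'b,'d,'y) bigroupoid_scheme \<Rightarrow>
   ('o,'a,'c,'p,'b,'d) bimorph \<Rightarrow> bool" where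
  "fibration A B F \<longleftrightarrow>
   (\<forall>X'\<in>obj A. \<forall>b\<in>arr1 B. tgt1 B b = fmap0 F X' \<longrightarrow>
      (\<exists>a\<in>arr1 A. tgt1 A a = X' \<and> fmap0 F (src1 A a) = src1 B b \<and> fmap1 F a = b)) \<and>
   (\<forall>a'\<in>arr1 A. \<forall>\<beta>\<in>arr2 B. cod2 B \<beta> = fmap1 F a' \<longrightarrow>
      (\<exists>\<alpha>\<in>arr2 A. cod2 A \<alpha> = a' \<and> fmap1 F (dom2 A \<alpha>) = dom2 B \<beta> \<and> fmap2 F \<alpha> = \<beta>))"

definition cofibration ::
  "('o,'a,'c,'z) bigroupoid_scheme \<Rightarrow> ('p,'b,'d,'y) bigroupoid_scheme \<Rightarrow>
   ('o,'a,'c,'p,'b,'d) bimorph \<Rightarrow> bool" where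
  "cofibration A B F \<longleftrightarrow>
   inj_on (fmap0 F) (obj A) \<and>
   (\<forall>X\<in>obj A. \<forall>Y\<in>obj A. inj_on (fmap1 F) (cob (hom_cat A X Y)))"

definition weak_equivalence ::
  "('o,'a,'c,'z) bigroupoid_scheme \<Rightarrow> ('p,'b,'d,'y) bigroupoid_scheme \<Rightarrow>
   ('o,'a,'c,'p,'b,'d) bimorph \<Rightarrow> bool" where
  "weak_equivalence A B F \<longleftrightarrow>
   (\<forall>Y\<in>obj B. \<exists>X'\<in>obj A. \<exists>b\<in>arr1 B. src1 B b = Y \<and> tgt1 B b = fmap0 F X') \<and>
   (\<forall>X\<in>obj A. \<forall>X'\<in>obj A.
      cequivalence (hom_cat A X X') (hom_cat B (fmap0 F X) (fmap0 F X')) (fmap1 F) (fmap2 F))"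

definition trivial_cofibration ::
  "('o,'a,'c,'z) bigroupoid_scheme \<Rightarrow> ('p,'b,'d,'y) bigroupoid_scheme \<Rightarrow>
   ('o,'a,'c,'p,'b,'d) bimorph \<Rightarrow> bool" where
  "trivial_cofibration A B F \<longleftrightarrow> cofibration A B F \<and> weak_equivalence A B F"

end

theory Submission
  imports Defs
begin

text \<open>Since \<open>K\<close> is bijective on 0-cells, injective on 1-cells and locally an equivalence, it has
  a strict retraction \<open>J\<close>: choose for every 1-cell \<open>d\<close> of \<open>D\<close> a 1-cell \<open>J d\<close> of \<open>A\<close> and a 2-cell
  \<open>e\<^sub>d : d \<Rightarrow> K (J d)\<close>, taking \<open>J (K a) = a\<close> and \<open>e\<^sub>K\<^sub>a\<close> an identity; everything else of \<open>J\<close> is forced by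
  full faithfulness, and \<open>J \<circ> K = id\<close> on the nose.  Then \<open>F \<circ> J\<close> restricts to \<open>F\<close> along \<open>K\<close>, but
  \<open>G \<circ> F \<circ> J\<close> agrees with \<open>H\<close> only up to the 2-cells \<open>H e\<^sub>d\<close>.  As \<open>G\<close> is a fibration, each \<open>H e\<^sub>d\<close>
  lifts to a 2-cell \<open>\<beta>\<^sub>d\<close> of \<open>B\<close> with codomain \<open>F (J d)\<close>, an identity on the image of \<open>K\<close>.
  Transporting \<open>F \<circ> J\<close> along the \<open>\<beta>\<^sub>d\<close> (replacing \<open>F (J d)\<close> by the domain of \<open>\<beta>\<^sub>d\<close> and conjugating
  all structure 2-cells) gives \<open>L\<close> with \<open>L \<circ> K = F\<close> and \<open>G \<circ> L = H\<close> strictly.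
  Here \<open>J\<close>, \<open>e\<^sub>d\<close> and \<open>\<beta>\<^sub>d\<close> are \<open>retraction\<close>, \<open>retr_cell d\<close> and \<open>lift_cell d\<close>.\<close>

definition vinv :: "('o,'a,'c,'z) bigroupoid_scheme \<Rightarrow> 'c \<Rightarrow> 'c" where
  "vinv B \<alpha> = (SOME \<beta>. cell B \<beta> (cod2 B \<alpha>) (dom2 B \<alpha>) \<and>
        vcomp B \<beta> \<alpha> = vid B (dom2 B \<alpha>) \<and> vcomp B \<alpha> \<beta> = vid B (cod2 B \<alpha>))"

locale bgpd =
  fixes B :: "('o,'a,'c,'z) bigroupoid_scheme"
  assumes arr1_typed: "\<forall>f\<in>arr1 B. src1 B f \<in> obj B \<and> tgt1 B f \<in> obj B"
    and arr2_typed: "\<forall>\<alpha>\<in>arr2 B. dom2 B \<alpha> \<in> arr1 B \<and> cod2 B \<alpha> \<in> arr1 B \<and>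
          src1 B (dom2 B \<alpha>) = src1 B (cod2 B \<alpha>) \<and> tgt1 B (dom2 B \<alpha>) = tgt1 B (cod2 B \<alpha>)"
    and vcomp_typed: "\<forall>\<alpha>\<in>arr2 B. \<forall>\<beta>\<in>arr2 B. cod2 B \<alpha> = dom2 B \<beta> \<longrightarrow>
          cell B (vcomp B \<beta> \<alpha>) (dom2 B \<alpha>) (cod2 B \<beta>)"
    and vid_typed: "\<forall>f\<in>arr1 B. cell B (vid B f) f f"
    and vcomp_assoc: "\<forall>\<alpha>\<in>arr2 B. \<forall>\<beta>\<in>arr2 B. \<forall>\<gamma>\<in>arr2 B. cod2 B \<alpha> = dom2 B \<beta> \<longrightarrow> cod2 B \<beta> = dom2 B \<gamma> \<longrightarrow>
          vcomp B \<gamma> (vcomp B \<beta> \<alpha>) = vcomp B (vcomp B \<gamma> \<beta>) \<alpha>"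
    and vid_unital: "\<forall>\<alpha>\<in>arr2 B. vcomp B \<alpha> (vid B (dom2 B \<alpha>)) = \<alpha> \<and> vcomp B (vid B (cod2 B \<alpha>)) \<alpha> = \<alpha>"
    and arr2_invertible: "\<forall>\<alpha>\<in>arr2 B. \<exists>\<beta>. cell B \<beta> (cod2 B \<alpha>) (dom2 B \<alpha>) \<and>
          vcomp B \<beta> \<alpha> = vid B (dom2 B \<alpha>) \<and> vcomp B \<alpha> \<beta> = vid B (cod2 B \<alpha>)"
    and hcomp1_typed: "\<forall>f\<in>arr1 B. \<forall>g\<in>arr1 B. src1 B g = tgt1 B f \<longrightarrow>
          hcomp1 B g f \<in> arr1 B \<and> src1 B (hcomp1 B g f) = src1 B f \<and> tgt1 B (hcomp1 B g f) = tgt1 B g"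
    and hcomp2_typed: "\<forall>\<alpha>\<in>arr2 B. \<forall>\<beta>\<in>arr2 B. src1 B (dom2 B \<beta>) = tgt1 B (dom2 B \<alpha>) \<longrightarrow>
          cell B (hcomp2 B \<beta> \<alpha>) (hcomp1 B (dom2 B \<beta>) (dom2 B \<alpha>)) (hcomp1 B (cod2 B \<beta>) (cod2 B \<alpha>))"
    and hcomp2_vid_vid: "\<forall>f\<in>arr1 B. \<forall>g\<in>arr1 B. src1 B g = tgt1 B f \<longrightarrow>
          hcomp2 B (vid B g) (vid B f) = vid B (hcomp1 B g f)"
    and hcomp2_interchange: "\<forall>\<alpha>\<in>arr2 B. \<forall>\<alpha>'\<in>arr2 B. \<forall>\<beta>\<in>arr2 B. \<forall>\<beta>'\<in>arr2 B.
          cod2 B \<alpha> = dom2 B \<alpha>' \<longrightarrow> cod2 B \<beta> = dom2 B \<beta>' \<longrightarrow> src1 B (dom2 B \<beta>) = tgt1 B (dom2 B \<alpha>) \<longrightarrow>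
          hcomp2 B (vcomp B \<beta>' \<beta>) (vcomp B \<alpha>' \<alpha>) = vcomp B (hcomp2 B \<beta>' \<alpha>') (hcomp2 B \<beta> \<alpha>)"
    and unit1_typed: "\<forall>X\<in>obj B. unit1 B X \<in> arr1 B \<and> src1 B (unit1 B X) = X \<and> tgt1 B (unit1 B X) = X"
    and inv1_typed: "\<forall>f\<in>arr1 B. inv1 B f \<in> arr1 B \<and> src1 B (inv1 B f) = tgt1 B f \<and> tgt1 B (inv1 B f) = src1 B f"
    and inv2_typed: "\<forall>\<alpha>\<in>arr2 B. cell B (inv2 B \<alpha>) (inv1 B (dom2 B \<alpha>)) (inv1 B (cod2 B \<alpha>))"
    and inv2_vid_vid: "\<forall>f\<in>arr1 B. inv2 B (vid B f) = vid B (inv1 B f)"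
    and inv2_vcomp_vcomp: "\<forall>\<alpha>\<in>arr2 B. \<forall>\<beta>\<in>arr2 B. cod2 B \<alpha> = dom2 B \<beta> \<longrightarrow>
          inv2 B (vcomp B \<beta> \<alpha>) = vcomp B (inv2 B \<beta>) (inv2 B \<alpha>)"
    and assoc_typed: "\<forall>f\<in>arr1 B. \<forall>g\<in>arr1 B. \<forall>h\<in>arr1 B. src1 B g = tgt1 B f \<longrightarrow> src1 B h = tgt1 B g \<longrightarrow>
          cell B (assoc B h g f) (hcomp1 B (hcomp1 B h g) f) (hcomp1 B h (hcomp1 B g f))"
    and assoc_natural: "\<forall>\<alpha>\<in>arr2 B. \<forall>\<beta>\<in>arr2 B. \<forall>\<gamma>\<in>arr2 B.
          src1 B (dom2 B \<beta>) = tgt1 B (dom2 B \<alpha>) \<longrightarrow> src1 B (dom2 B \<gamma>) = tgt1 B (dom2 B \<beta>) \<longrightarrow>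
          vcomp B (assoc B (cod2 B \<gamma>) (cod2 B \<beta>) (cod2 B \<alpha>)) (hcomp2 B (hcomp2 B \<gamma> \<beta>) \<alpha>) =
          vcomp B (hcomp2 B \<gamma> (hcomp2 B \<beta> \<alpha>)) (assoc B (dom2 B \<gamma>) (dom2 B \<beta>) (dom2 B \<alpha>))"
    and lunit_typed: "\<forall>f\<in>arr1 B. cell B (lunit B f) (hcomp1 B (unit1 B (tgt1 B f)) f) f"
    and lunit_natural: "\<forall>\<alpha>\<in>arr2 B. vcomp B (lunit B (cod2 B \<alpha>)) (hcomp2 B (vid B (unit1 B (tgt1 B (dom2 B \<alpha>)))) \<alpha>) =
          vcomp B \<alpha> (lunit B (dom2 B \<alpha>))"
    and runit_typed: "\<forall>f\<in>arr1 B. cell B (runit B f) (hcomp1 B f (unit1 B (src1 B f))) f"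
    and runit_natural: "\<forall>\<alpha>\<in>arr2 B. vcomp B (runit B (cod2 B \<alpha>)) (hcomp2 B \<alpha> (vid B (unit1 B (src1 B (dom2 B \<alpha>))))) =
          vcomp B \<alpha> (runit B (dom2 B \<alpha>))"
    and ecell_typed: "\<forall>f\<in>arr1 B. cell B (ecell B f) (hcomp1 B (inv1 B f) f) (unit1 B (src1 B f))"
    and ecell_natural: "\<forall>\<alpha>\<in>arr2 B. vcomp B (ecell B (cod2 B \<alpha>)) (hcomp2 B (inv2 B \<alpha>) \<alpha>) =
          vcomp B (vid B (unit1 B (src1 B (dom2 B \<alpha>)))) (ecell B (dom2 B \<alpha>))"
    and icell_typed: "\<forall>f\<in>arr1 B. cell B (icell B f) (unit1 B (tgt1 B f)) (hcomp1 B f (inv1 B f))"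
    and icell_natural: "\<forall>\<alpha>\<in>arr2 B. vcomp B (icell B (cod2 B \<alpha>)) (vid B (unit1 B (tgt1 B (dom2 B \<alpha>)))) =
          vcomp B (hcomp2 B \<alpha> (inv2 B \<alpha>)) (icell B (dom2 B \<alpha>))"
    and pentagon: "\<forall>f\<in>arr1 B. \<forall>g\<in>arr1 B. \<forall>h\<in>arr1 B. \<forall>k\<in>arr1 B.
          src1 B g = tgt1 B f \<longrightarrow> src1 B h = tgt1 B g \<longrightarrow> src1 B k = tgt1 B h \<longrightarrow>
          vcomp B (assoc B k h (hcomp1 B g f)) (assoc B (hcomp1 B k h) g f) =
          vcomp B (hcomp2 B (vid B k) (assoc B h g f))
            (vcomp B (assoc B k (hcomp1 B h g) f) (hcomp2 B (assoc B k h g) (vid B f)))"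
    and triangle: "\<forall>f\<in>arr1 B. \<forall>g\<in>arr1 B. src1 B g = tgt1 B f \<longrightarrow>
          vcomp B (hcomp2 B (vid B g) (lunit B f)) (assoc B g (unit1 B (tgt1 B f)) f) =
          hcomp2 B (runit B g) (vid B f)"
    and zigzag: "\<forall>f\<in>arr1 B.
          vcomp B (runit B f) (vcomp B (hcomp2 B (vid B f) (ecell B f))
            (vcomp B (assoc B f (inv1 B f) f) (hcomp2 B (icell B f) (vid B f)))) = lunit B f"

lemma bgpd_iff_bigroupoid: "bgpd B \<longleftrightarrow> bigroupoid B"
  unfolding bgpd_def bigroupoid_def conj_assoc by (rule refl)

context bgpd
begin

lemma is_bigroupoid: "bigroupoid B"
  using bgpd_axioms unfolding bgpd_iff_bigroupoid .

lemma src_obj[simp]: "f \<in> arr1 B \<Longrightarrow> src1 B f \<in> obj B" using arr1_typed by metis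
lemma tgt_obj[simp]: "f \<in> arr1 B \<Longrightarrow> tgt1 B f \<in> obj B" using arr1_typed by metis
lemma dom_arr[simp]: "\<alpha> \<in> arr2 B \<Longrightarrow> dom2 B \<alpha> \<in> arr1 B" using arr2_typed by metis
lemma cod_arr[simp]: "\<alpha> \<in> arr2 B \<Longrightarrow> cod2 B \<alpha> \<in> arr1 B" using arr2_typed by metis
lemma src_cod[simp]: "\<alpha> \<in> arr2 B \<Longrightarrow> src1 B (cod2 B \<alpha>) = src1 B (dom2 B \<alpha>)" using arr2_typed by metis
lemma tgt_cod[simp]: "\<alpha> \<in> arr2 B \<Longrightarrow> tgt1 B (cod2 B \<alpha>) = tgt1 B (dom2 B \<alpha>)" using arr2_typed by metis

lemma vcomp_arr[simp]: "\<alpha> \<in> arr2 B \<Longrightarrow> \<beta> \<in> arr2 B \<Longrightarrow> cod2 B \<alpha> = dom2 B \<beta> \<Longrightarrow> vcomp B \<beta> \<alpha> \<in> arr2 B"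
  using vcomp_typed unfolding cell_def by metis
lemma vcomp_dom[simp]: "\<alpha> \<in> arr2 B \<Longrightarrow> \<beta> \<in> arr2 B \<Longrightarrow> cod2 B \<alpha> = dom2 B \<beta> \<Longrightarrow> dom2 B (vcomp B \<beta> \<alpha>) = dom2 B \<alpha>"
  using vcomp_typed unfolding cell_def by metis
lemma vcomp_cod[simp]: "\<alpha> \<in> arr2 B \<Longrightarrow> \<beta> \<in> arr2 B \<Longrightarrow> cod2 B \<alpha> = dom2 B \<beta> \<Longrightarrow> cod2 B (vcomp B \<beta> \<alpha>) = cod2 B \<beta>"
  using vcomp_typed unfolding cell_def by metis
lemma vid_arr[simp]: "f \<in> arr1 B \<Longrightarrow> vid B f \<in> arr2 B" using vid_typed unfolding cell_def by metis
lemma vid_dom[simp]: "f \<in> arr1 B \<Longrightarrow> dom2 B (vid B f) = f" using vid_typed unfolding cell_def by metis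
lemma vid_cod[simp]: "f \<in> arr1 B \<Longrightarrow> cod2 B (vid B f) = f" using vid_typed unfolding cell_def by metis
lemma vassoc[simp]: "\<alpha> \<in> arr2 B \<Longrightarrow> \<beta> \<in> arr2 B \<Longrightarrow> \<gamma> \<in> arr2 B \<Longrightarrow> cod2 B \<alpha> = dom2 B \<beta> \<Longrightarrow> cod2 B \<beta> = dom2 B \<gamma> \<Longrightarrow>
        vcomp B (vcomp B \<gamma> \<beta>) \<alpha> = vcomp B \<gamma> (vcomp B \<beta> \<alpha>)"
  using vcomp_assoc by metis
lemma vid_r[simp]: "\<alpha> \<in> arr2 B \<Longrightarrow> f = dom2 B \<alpha> \<Longrightarrow> vcomp B \<alpha> (vid B f) = \<alpha>" using vid_unital by metis
lemma vid_l[simp]: "\<alpha> \<in> arr2 B \<Longrightarrow> f = cod2 B \<alpha> \<Longrightarrow> vcomp B (vid B f) \<alpha> = \<alpha>" using vid_unital by metis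

lemma hcomp1_arr[simp]: "f \<in> arr1 B \<Longrightarrow> g \<in> arr1 B \<Longrightarrow> src1 B g = tgt1 B f \<Longrightarrow> hcomp1 B g f \<in> arr1 B"
  using hcomp1_typed by metis
lemma hcomp1_src[simp]: "f \<in> arr1 B \<Longrightarrow> g \<in> arr1 B \<Longrightarrow> src1 B g = tgt1 B f \<Longrightarrow> src1 B (hcomp1 B g f) = src1 B f"
  using hcomp1_typed by metis
lemma hcomp1_tgt[simp]: "f \<in> arr1 B \<Longrightarrow> g \<in> arr1 B \<Longrightarrow> src1 B g = tgt1 B f \<Longrightarrow> tgt1 B (hcomp1 B g f) = tgt1 B g"
  using hcomp1_typed by metis
lemma hcomp2_arr[simp]: "\<alpha> \<in> arr2 B \<Longrightarrow> \<beta> \<in> arr2 B \<Longrightarrow> src1 B (dom2 B \<beta>) = tgt1 B (dom2 B \<alpha>) \<Longrightarrow> hcomp2 B \<beta> \<alpha> \<in> arr2 B"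
  using hcomp2_typed unfolding cell_def by metis
lemma hcomp2_dom[simp]: "\<alpha> \<in> arr2 B \<Longrightarrow> \<beta> \<in> arr2 B \<Longrightarrow> src1 B (dom2 B \<beta>) = tgt1 B (dom2 B \<alpha>) \<Longrightarrow>
   dom2 B (hcomp2 B \<beta> \<alpha>) = hcomp1 B (dom2 B \<beta>) (dom2 B \<alpha>)"
  using hcomp2_typed unfolding cell_def by metis
lemma hcomp2_cod[simp]: "\<alpha> \<in> arr2 B \<Longrightarrow> \<beta> \<in> arr2 B \<Longrightarrow> src1 B (dom2 B \<beta>) = tgt1 B (dom2 B \<alpha>) \<Longrightarrow>
   cod2 B (hcomp2 B \<beta> \<alpha>) = hcomp1 B (cod2 B \<beta>) (cod2 B \<alpha>)"
  using hcomp2_typed unfolding cell_def by metis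
lemma hcomp2_vid[simp]: "f \<in> arr1 B \<Longrightarrow> g \<in> arr1 B \<Longrightarrow> src1 B g = tgt1 B f \<Longrightarrow>
        hcomp2 B (vid B g) (vid B f) = vid B (hcomp1 B g f)"
  using hcomp2_vid_vid by metis
lemma interchange: "\<alpha> \<in> arr2 B \<Longrightarrow> \<alpha>' \<in> arr2 B \<Longrightarrow> \<beta> \<in> arr2 B \<Longrightarrow> \<beta>' \<in> arr2 B \<Longrightarrow>
        cod2 B \<alpha> = dom2 B \<alpha>' \<Longrightarrow> cod2 B \<beta> = dom2 B \<beta>' \<Longrightarrow> src1 B (dom2 B \<beta>) = tgt1 B (dom2 B \<alpha>) \<Longrightarrow>
        hcomp2 B (vcomp B \<beta>' \<beta>) (vcomp B \<alpha>' \<alpha>) = vcomp B (hcomp2 B \<beta>' \<alpha>') (hcomp2 B \<beta> \<alpha>)"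
  using hcomp2_interchange by metis
lemma unit1_arr[simp]: "X \<in> obj B \<Longrightarrow> unit1 B X \<in> arr1 B" using unit1_typed by metis
lemma unit1_src[simp]: "X \<in> obj B \<Longrightarrow> src1 B (unit1 B X) = X" using unit1_typed by metis
lemma unit1_tgt[simp]: "X \<in> obj B \<Longrightarrow> tgt1 B (unit1 B X) = X" using unit1_typed by metis
lemma inv1_arr[simp]: "f \<in> arr1 B \<Longrightarrow> inv1 B f \<in> arr1 B" using inv1_typed by metis
lemma inv1_src[simp]: "f \<in> arr1 B \<Longrightarrow> src1 B (inv1 B f) = tgt1 B f" using inv1_typed by metis
lemma inv1_tgt[simp]: "f \<in> arr1 B \<Longrightarrow> tgt1 B (inv1 B f) = src1 B f" using inv1_typed by metis
lemma inv2_arr[simp]: "\<alpha> \<in> arr2 B \<Longrightarrow> inv2 B \<alpha> \<in> arr2 B" using inv2_typed unfolding cell_def by metis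
lemma inv2_dom[simp]: "\<alpha> \<in> arr2 B \<Longrightarrow> dom2 B (inv2 B \<alpha>) = inv1 B (dom2 B \<alpha>)"
  using inv2_typed unfolding cell_def by metis
lemma inv2_cod[simp]: "\<alpha> \<in> arr2 B \<Longrightarrow> cod2 B (inv2 B \<alpha>) = inv1 B (cod2 B \<alpha>)"
  using inv2_typed unfolding cell_def by metis
lemma inv2_vid[simp]: "f \<in> arr1 B \<Longrightarrow> inv2 B (vid B f) = vid B (inv1 B f)" using inv2_vid_vid by metis
lemma inv2_vcomp[simp]: "\<alpha> \<in> arr2 B \<Longrightarrow> \<beta> \<in> arr2 B \<Longrightarrow> cod2 B \<alpha> = dom2 B \<beta> \<Longrightarrow>
        inv2 B (vcomp B \<beta> \<alpha>) = vcomp B (inv2 B \<beta>) (inv2 B \<alpha>)" using inv2_vcomp_vcomp by metis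

lemma assoc_arr[simp]: "f \<in> arr1 B \<Longrightarrow> g \<in> arr1 B \<Longrightarrow> h \<in> arr1 B \<Longrightarrow> src1 B g = tgt1 B f \<Longrightarrow> src1 B h = tgt1 B g \<Longrightarrow>
   assoc B h g f \<in> arr2 B" using assoc_typed unfolding cell_def by metis
lemma assoc_dom[simp]: "f \<in> arr1 B \<Longrightarrow> g \<in> arr1 B \<Longrightarrow> h \<in> arr1 B \<Longrightarrow> src1 B g = tgt1 B f \<Longrightarrow> src1 B h = tgt1 B g \<Longrightarrow>
   dom2 B (assoc B h g f) = hcomp1 B (hcomp1 B h g) f" using assoc_typed unfolding cell_def by metis
lemma assoc_cod[simp]: "f \<in> arr1 B \<Longrightarrow> g \<in> arr1 B \<Longrightarrow> h \<in> arr1 B \<Longrightarrow> src1 B g = tgt1 B f \<Longrightarrow> src1 B h = tgt1 B g \<Longrightarrow>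
   cod2 B (assoc B h g f) = hcomp1 B h (hcomp1 B g f)" using assoc_typed unfolding cell_def by metis
lemma assoc_nat: "\<alpha> \<in> arr2 B \<Longrightarrow> \<beta> \<in> arr2 B \<Longrightarrow> \<gamma> \<in> arr2 B \<Longrightarrow>
        src1 B (dom2 B \<beta>) = tgt1 B (dom2 B \<alpha>) \<Longrightarrow> src1 B (dom2 B \<gamma>) = tgt1 B (dom2 B \<beta>) \<Longrightarrow>
        vcomp B (assoc B (cod2 B \<gamma>) (cod2 B \<beta>) (cod2 B \<alpha>)) (hcomp2 B (hcomp2 B \<gamma> \<beta>) \<alpha>) =
        vcomp B (hcomp2 B \<gamma> (hcomp2 B \<beta> \<alpha>)) (assoc B (dom2 B \<gamma>) (dom2 B \<beta>) (dom2 B \<alpha>))"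
  using assoc_natural by metis
lemma lunit_arr[simp]: "f \<in> arr1 B \<Longrightarrow> lunit B f \<in> arr2 B"
  using lunit_typed unfolding cell_def by metis
lemma lunit_dom[simp]: "f \<in> arr1 B \<Longrightarrow> dom2 B (lunit B f) = hcomp1 B (unit1 B (tgt1 B f)) f"
  using lunit_typed unfolding cell_def by metis
lemma lunit_cod[simp]: "f \<in> arr1 B \<Longrightarrow> cod2 B (lunit B f) = f"
  using lunit_typed unfolding cell_def by metis
lemma lunit_nat: "\<alpha> \<in> arr2 B \<Longrightarrow> vcomp B (lunit B (cod2 B \<alpha>)) (hcomp2 B (vid B (unit1 B (tgt1 B (dom2 B \<alpha>)))) \<alpha>) =
        vcomp B \<alpha> (lunit B (dom2 B \<alpha>))" using lunit_natural by metis
lemma runit_arr[simp]: "f \<in> arr1 B \<Longrightarrow> runit B f \<in> arr2 B"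
  using runit_typed unfolding cell_def by metis
lemma runit_dom[simp]: "f \<in> arr1 B \<Longrightarrow> dom2 B (runit B f) = hcomp1 B f (unit1 B (src1 B f))"
  using runit_typed unfolding cell_def by metis
lemma runit_cod[simp]: "f \<in> arr1 B \<Longrightarrow> cod2 B (runit B f) = f"
  using runit_typed unfolding cell_def by metis
lemma runit_nat: "\<alpha> \<in> arr2 B \<Longrightarrow> vcomp B (runit B (cod2 B \<alpha>)) (hcomp2 B \<alpha> (vid B (unit1 B (src1 B (dom2 B \<alpha>))))) =
        vcomp B \<alpha> (runit B (dom2 B \<alpha>))" using runit_natural by metis
lemma ecell_arr[simp]: "f \<in> arr1 B \<Longrightarrow> ecell B f \<in> arr2 B"
  using ecell_typed unfolding cell_def by metis
lemma ecell_dom[simp]: "f \<in> arr1 B \<Longrightarrow> dom2 B (ecell B f) = hcomp1 B (inv1 B f) f"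
  using ecell_typed unfolding cell_def by metis
lemma ecell_cod[simp]: "f \<in> arr1 B \<Longrightarrow> cod2 B (ecell B f) = unit1 B (src1 B f)"
  using ecell_typed unfolding cell_def by metis
lemma ecell_nat: "\<alpha> \<in> arr2 B \<Longrightarrow> vcomp B (ecell B (cod2 B \<alpha>)) (hcomp2 B (inv2 B \<alpha>) \<alpha>) =
        vcomp B (vid B (unit1 B (src1 B (dom2 B \<alpha>)))) (ecell B (dom2 B \<alpha>))" using ecell_natural by metis
lemma icell_arr[simp]: "f \<in> arr1 B \<Longrightarrow> icell B f \<in> arr2 B"
  using icell_typed unfolding cell_def by metis
lemma icell_dom[simp]: "f \<in> arr1 B \<Longrightarrow> dom2 B (icell B f) = unit1 B (tgt1 B f)"
  using icell_typed unfolding cell_def by metis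
lemma icell_cod[simp]: "f \<in> arr1 B \<Longrightarrow> cod2 B (icell B f) = hcomp1 B f (inv1 B f)"
  using icell_typed unfolding cell_def by metis
lemma icell_nat: "\<alpha> \<in> arr2 B \<Longrightarrow> vcomp B (icell B (cod2 B \<alpha>)) (vid B (unit1 B (tgt1 B (dom2 B \<alpha>)))) =
        vcomp B (hcomp2 B \<alpha> (inv2 B \<alpha>)) (icell B (dom2 B \<alpha>))" using icell_natural by metis

lemma vinv_props:
  assumes "\<alpha> \<in> arr2 B"
  shows "cell B (vinv B \<alpha>) (cod2 B \<alpha>) (dom2 B \<alpha>) \<and> vcomp B (vinv B \<alpha>) \<alpha> = vid B (dom2 B \<alpha>) \<and>
    vcomp B \<alpha> (vinv B \<alpha>) = vid B (cod2 B \<alpha>)"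
  unfolding vinv_def by (rule someI_ex[OF arr2_invertible[rule_format, OF assms]])
lemma vinv_arr[simp]: "\<alpha> \<in> arr2 B \<Longrightarrow> vinv B \<alpha> \<in> arr2 B" using vinv_props unfolding cell_def by blast
lemma vinv_dom[simp]: "\<alpha> \<in> arr2 B \<Longrightarrow> dom2 B (vinv B \<alpha>) = cod2 B \<alpha>"
  using vinv_props unfolding cell_def by blast
lemma vinv_cod[simp]: "\<alpha> \<in> arr2 B \<Longrightarrow> cod2 B (vinv B \<alpha>) = dom2 B \<alpha>"
  using vinv_props unfolding cell_def by blast
lemma vinv_left[simp]: "\<alpha> \<in> arr2 B \<Longrightarrow> vcomp B (vinv B \<alpha>) \<alpha> = vid B (dom2 B \<alpha>)"
  using vinv_props by blast
lemma vinv_right[simp]: "\<alpha> \<in> arr2 B \<Longrightarrow> vcomp B \<alpha> (vinv B \<alpha>) = vid B (cod2 B \<alpha>)"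
  using vinv_props by blast

lemma vinv_vcomp_cancel[simp]: "\<alpha> \<in> arr2 B \<Longrightarrow> x \<in> arr2 B \<Longrightarrow> cod2 B x = dom2 B \<alpha> \<Longrightarrow> vcomp B (vinv B \<alpha>) (vcomp B \<alpha> x) = x"
  by (metis vassoc vcomp_arr vid_l vinv_arr vinv_dom vinv_left)
lemma vcomp_vinv_cancel[simp]: "\<alpha> \<in> arr2 B \<Longrightarrow> x \<in> arr2 B \<Longrightarrow> cod2 B x = cod2 B \<alpha> \<Longrightarrow> vcomp B \<alpha> (vcomp B (vinv B \<alpha>) x) = x"
  by (metis vassoc vinv_arr vinv_cod vinv_dom vinv_right vid_l)

lemma vcomp_reassoc: "vcomp B x y = z \<Longrightarrow> x \<in> arr2 B \<Longrightarrow> y \<in> arr2 B \<Longrightarrow> w \<in> arr2 B \<Longrightarrow> cod2 B y = dom2 B x \<Longrightarrow>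
   cod2 B w = dom2 B y \<Longrightarrow> vcomp B x (vcomp B y w) = vcomp B z w"
  using vassoc[of w y x] by simp

lemma vinv_unique: assumes a: "\<alpha> \<in> arr2 B" and b: "\<beta> \<in> arr2 B" and ab: "cod2 B \<alpha> = dom2 B \<beta>"
   and e: "vcomp B \<beta> \<alpha> = vid B (dom2 B \<alpha>)"
  shows "vinv B \<alpha> = \<beta>"
proof -
  have "\<beta> = vcomp B \<beta> (vid B (cod2 B \<alpha>))" using b ab by simp
  also have "\<dots> = vcomp B \<beta> (vcomp B \<alpha> (vinv B \<alpha>))" using a by simp
  also have "\<dots> = vcomp B (vcomp B \<beta> \<alpha>) (vinv B \<alpha>)" using a b ab by (simp only: vassoc vinv_arr vinv_cod)
  also have "\<dots> = vinv B \<alpha>" using a e by (simp del: vassoc)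
  finally show ?thesis by (rule sym)
qed

lemma vinv_vid[simp]: "f \<in> arr1 B \<Longrightarrow> vinv B (vid B f) = vid B f"
  by (rule vinv_unique) auto
lemma vinv_vcomp[simp]: "\<alpha> \<in> arr2 B \<Longrightarrow> \<beta> \<in> arr2 B \<Longrightarrow> cod2 B \<alpha> = dom2 B \<beta> \<Longrightarrow>
   vinv B (vcomp B \<beta> \<alpha>) = vcomp B (vinv B \<alpha>) (vinv B \<beta>)"
  by (rule vinv_unique) auto
lemma vinv_hcomp2[simp]: "\<alpha> \<in> arr2 B \<Longrightarrow> \<beta> \<in> arr2 B \<Longrightarrow> src1 B (dom2 B \<beta>) = tgt1 B (dom2 B \<alpha>) \<Longrightarrow>
   vinv B (hcomp2 B \<beta> \<alpha>) = hcomp2 B (vinv B \<beta>) (vinv B \<alpha>)"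
  by (rule vinv_unique) (auto simp: interchange[symmetric])
lemma vinv_inv2: "\<alpha> \<in> arr2 B \<Longrightarrow> vinv B (inv2 B \<alpha>) = inv2 B (vinv B \<alpha>)"
  by (rule vinv_unique) (auto simp: inv2_vcomp[symmetric])

lemma whisker_left_vcomp: "\<alpha> \<in> arr2 B \<Longrightarrow> \<alpha>' \<in> arr2 B \<Longrightarrow> g \<in> arr1 B \<Longrightarrow> cod2 B \<alpha> = dom2 B \<alpha>' \<Longrightarrow> src1 B g = tgt1 B (dom2 B \<alpha>) \<Longrightarrow>
   hcomp2 B (vid B g) (vcomp B \<alpha>' \<alpha>) = vcomp B (hcomp2 B (vid B g) \<alpha>') (hcomp2 B (vid B g) \<alpha>)"
  by (metis interchange vid_arr vid_cod vid_dom vid_l)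
lemma whisker_right_vcomp: "\<alpha> \<in> arr2 B \<Longrightarrow> \<alpha>' \<in> arr2 B \<Longrightarrow> f \<in> arr1 B \<Longrightarrow> cod2 B \<alpha> = dom2 B \<alpha>' \<Longrightarrow> src1 B (dom2 B \<alpha>) = tgt1 B f \<Longrightarrow>
   hcomp2 B (vcomp B \<alpha>' \<alpha>) (vid B f) = vcomp B (hcomp2 B \<alpha>' (vid B f)) (hcomp2 B \<alpha> (vid B f))"
  by (metis interchange vid_arr vid_cod vid_dom vid_l)

lemma vcomp_reassoc3: "vcomp B x (vcomp B y z) = r \<Longrightarrow> x \<in> arr2 B \<Longrightarrow> y \<in> arr2 B \<Longrightarrow> z \<in> arr2 B \<Longrightarrow> w \<in> arr2 B \<Longrightarrow>
   cod2 B y = dom2 B x \<Longrightarrow> cod2 B z = dom2 B y \<Longrightarrow>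
   cod2 B w = dom2 B z \<Longrightarrow> vcomp B x (vcomp B y (vcomp B z w)) = vcomp B r w"
  by (erule subst) simp

lemma vcomp_solve: "vcomp B x y = z \<Longrightarrow> x \<in> arr2 B \<Longrightarrow> y \<in> arr2 B \<Longrightarrow> cod2 B y = dom2 B x \<Longrightarrow>
   x = vcomp B z (vinv B y)"
  by (erule subst) simp

lemma vcomp_cancel_right: "vcomp B x \<alpha> = vcomp B y \<alpha> \<Longrightarrow> x \<in> arr2 B \<Longrightarrow> y \<in> arr2 B \<Longrightarrow> \<alpha> \<in> arr2 B \<Longrightarrow>
   cod2 B \<alpha> = dom2 B x \<Longrightarrow> cod2 B \<alpha> = dom2 B y \<Longrightarrow> x = y"
  by (metis vcomp_vinv_cancel vassoc vid_r vinv_arr vinv_cod vinv_dom vinv_right)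
lemma vcomp_cancel_left: "vcomp B \<alpha> x = vcomp B \<alpha> y \<Longrightarrow> x \<in> arr2 B \<Longrightarrow> y \<in> arr2 B \<Longrightarrow> \<alpha> \<in> arr2 B \<Longrightarrow>
   cod2 B x = dom2 B \<alpha> \<Longrightarrow> cod2 B y = dom2 B \<alpha> \<Longrightarrow> x = y"
  by (metis vinv_vcomp_cancel)

end

locale bgpd_morphism = X: bgpd X + Y: bgpd Y
  for X :: "('o,'a,'c,'z) bigroupoid_scheme" and Y :: "('p,'b,'d,'y) bigroupoid_scheme" +
  fixes F :: "('o,'a,'c,'p,'b,'d) bimorph"
  assumes fmap0_typed: "\<forall>x\<in>obj X. fmap0 F x \<in> obj Y"
    and fmap1_typed: "\<forall>f\<in>arr1 X. fmap1 F f \<in> arr1 Y \<and> src1 Y (fmap1 F f) = fmap0 F (src1 X f) \<and>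
          tgt1 Y (fmap1 F f) = fmap0 F (tgt1 X f)"
    and fmap2_typed: "\<forall>\<alpha>\<in>arr2 X. cell Y (fmap2 F \<alpha>) (fmap1 F (dom2 X \<alpha>)) (fmap1 F (cod2 X \<alpha>))"
    and fmap2_vid_vid: "\<forall>f\<in>arr1 X. fmap2 F (vid X f) = vid Y (fmap1 F f)"
    and fmap2_vcomp_vcomp: "\<forall>\<alpha>\<in>arr2 X. \<forall>\<beta>\<in>arr2 X. cod2 X \<alpha> = dom2 X \<beta> \<longrightarrow>
          fmap2 F (vcomp X \<beta> \<alpha>) = vcomp Y (fmap2 F \<beta>) (fmap2 F \<alpha>)"
    and fcmp_typed: "\<forall>f\<in>arr1 X. \<forall>g\<in>arr1 X. src1 X g = tgt1 X f \<longrightarrow>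
          cell Y (fcmp F g f) (hcomp1 Y (fmap1 F g) (fmap1 F f)) (fmap1 F (hcomp1 X g f))"
    and fcmp_natural: "\<forall>\<alpha>\<in>arr2 X. \<forall>\<beta>\<in>arr2 X. src1 X (dom2 X \<beta>) = tgt1 X (dom2 X \<alpha>) \<longrightarrow>
          vcomp Y (fcmp F (cod2 X \<beta>) (cod2 X \<alpha>)) (hcomp2 Y (fmap2 F \<beta>) (fmap2 F \<alpha>)) =
          vcomp Y (fmap2 F (hcomp2 X \<beta> \<alpha>)) (fcmp F (dom2 X \<beta>) (dom2 X \<alpha>))"
    and funit_typed: "\<forall>x\<in>obj X. cell Y (funit F x) (unit1 Y (fmap0 F x)) (fmap1 F (unit1 X x))"
    and finv_typed: "\<forall>f\<in>arr1 X. cell Y (finv F f) (inv1 Y (fmap1 F f)) (fmap1 F (inv1 X f))"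
    and finv_natural: "\<forall>\<alpha>\<in>arr2 X. vcomp Y (finv F (cod2 X \<alpha>)) (inv2 Y (fmap2 F \<alpha>)) =
          vcomp Y (fmap2 F (inv2 X \<alpha>)) (finv F (dom2 X \<alpha>))"
    and assoc_coherent: "\<forall>f\<in>arr1 X. \<forall>g\<in>arr1 X. \<forall>h\<in>arr1 X. src1 X g = tgt1 X f \<longrightarrow> src1 X h = tgt1 X g \<longrightarrow>
          vcomp Y (fmap2 F (assoc X h g f))
            (vcomp Y (fcmp F (hcomp1 X h g) f) (hcomp2 Y (fcmp F h g) (vid Y (fmap1 F f)))) =
          vcomp Y (fcmp F h (hcomp1 X g f))
            (vcomp Y (hcomp2 Y (vid Y (fmap1 F h)) (fcmp F g f))
              (assoc Y (fmap1 F h) (fmap1 F g) (fmap1 F f)))"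
    and runit_coherent: "\<forall>f\<in>arr1 X.
          vcomp Y (fmap2 F (runit X f))
            (vcomp Y (fcmp F f (unit1 X (src1 X f))) (hcomp2 Y (vid Y (fmap1 F f)) (funit F (src1 X f)))) =
          runit Y (fmap1 F f)"
    and lunit_coherent: "\<forall>f\<in>arr1 X.
          vcomp Y (fmap2 F (lunit X f))
            (vcomp Y (fcmp F (unit1 X (tgt1 X f)) f) (hcomp2 Y (funit F (tgt1 X f)) (vid Y (fmap1 F f)))) =
          lunit Y (fmap1 F f)"
    and ecell_coherent: "\<forall>f\<in>arr1 X.
          vcomp Y (fmap2 F (ecell X f))
            (vcomp Y (fcmp F (inv1 X f) f) (hcomp2 Y (finv F f) (vid Y (fmap1 F f)))) =
          vcomp Y (funit F (src1 X f)) (ecell Y (fmap1 F f))"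
    and icell_coherent: "\<forall>f\<in>arr1 X.
          vcomp Y (fmap2 F (icell X f)) (funit F (tgt1 X f)) =
          vcomp Y (fcmp F f (inv1 X f))
            (vcomp Y (hcomp2 Y (vid Y (fmap1 F f)) (finv F f)) (icell Y (fmap1 F f)))"

lemma bgpd_morphism_iff_bimorphism: "bgpd_morphism X Y F \<longleftrightarrow> bimorphism X Y F"
  unfolding bgpd_morphism_def bgpd_morphism_axioms_def bimorphism_def bgpd_iff_bigroupoid conj_assoc
  by (rule refl)

lemmas bgpd_morphismI = bgpd_morphism_iff_bimorphism[THEN iffD2]

context bgpd_morphism
begin

lemma fmap0_obj[simp]: "x \<in> obj X \<Longrightarrow> fmap0 F x \<in> obj Y" using fmap0_typed by metis
lemma fmap1_arr[simp]: "f \<in> arr1 X \<Longrightarrow> fmap1 F f \<in> arr1 Y" using fmap1_typed by metis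
lemma fmap1_src[simp]: "f \<in> arr1 X \<Longrightarrow> src1 Y (fmap1 F f) = fmap0 F (src1 X f)"
  using fmap1_typed by metis
lemma fmap1_tgt[simp]: "f \<in> arr1 X \<Longrightarrow> tgt1 Y (fmap1 F f) = fmap0 F (tgt1 X f)"
  using fmap1_typed by metis
lemma fmap2_arr[simp]: "\<alpha> \<in> arr2 X \<Longrightarrow> fmap2 F \<alpha> \<in> arr2 Y"
  using fmap2_typed unfolding cell_def by metis
lemma fmap2_dom[simp]: "\<alpha> \<in> arr2 X \<Longrightarrow> dom2 Y (fmap2 F \<alpha>) = fmap1 F (dom2 X \<alpha>)"
  using fmap2_typed unfolding cell_def by metis
lemma fmap2_cod[simp]: "\<alpha> \<in> arr2 X \<Longrightarrow> cod2 Y (fmap2 F \<alpha>) = fmap1 F (cod2 X \<alpha>)"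
  using fmap2_typed unfolding cell_def by metis
lemma fmap2_vid[simp]: "f \<in> arr1 X \<Longrightarrow> fmap2 F (vid X f) = vid Y (fmap1 F f)"
  using fmap2_vid_vid by metis
lemma fmap2_vcomp[simp]: "\<alpha> \<in> arr2 X \<Longrightarrow> \<beta> \<in> arr2 X \<Longrightarrow> cod2 X \<alpha> = dom2 X \<beta> \<Longrightarrow>
   fmap2 F (vcomp X \<beta> \<alpha>) = vcomp Y (fmap2 F \<beta>) (fmap2 F \<alpha>)" using fmap2_vcomp_vcomp by metis
lemma fmap2_vinv[simp]: "\<alpha> \<in> arr2 X \<Longrightarrow> fmap2 F (vinv X \<alpha>) = vinv Y (fmap2 F \<alpha>)"
  by (rule Y.vinv_unique[symmetric]) (auto simp: fmap2_vcomp[symmetric])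
lemma fcmp_arr[simp]: "f \<in> arr1 X \<Longrightarrow> g \<in> arr1 X \<Longrightarrow> src1 X g = tgt1 X f \<Longrightarrow> fcmp F g f \<in> arr2 Y"
  using fcmp_typed unfolding cell_def by metis
lemma fcmp_dom[simp]: "f \<in> arr1 X \<Longrightarrow> g \<in> arr1 X \<Longrightarrow> src1 X g = tgt1 X f \<Longrightarrow>
   dom2 Y (fcmp F g f) = hcomp1 Y (fmap1 F g) (fmap1 F f)" using fcmp_typed unfolding cell_def by metis
lemma fcmp_cod[simp]: "f \<in> arr1 X \<Longrightarrow> g \<in> arr1 X \<Longrightarrow> src1 X g = tgt1 X f \<Longrightarrow>
   cod2 Y (fcmp F g f) = fmap1 F (hcomp1 X g f)" using fcmp_typed unfolding cell_def by metis
lemma fcmp_nat: "\<alpha> \<in> arr2 X \<Longrightarrow> \<beta> \<in> arr2 X \<Longrightarrow> src1 X (dom2 X \<beta>) = tgt1 X (dom2 X \<alpha>) \<Longrightarrow>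
        vcomp Y (fcmp F (cod2 X \<beta>) (cod2 X \<alpha>)) (hcomp2 Y (fmap2 F \<beta>) (fmap2 F \<alpha>)) =
        vcomp Y (fmap2 F (hcomp2 X \<beta> \<alpha>)) (fcmp F (dom2 X \<beta>) (dom2 X \<alpha>))" using fcmp_natural by metis
lemma funit_arr[simp]: "x \<in> obj X \<Longrightarrow> funit F x \<in> arr2 Y"
  using funit_typed unfolding cell_def by metis
lemma funit_dom[simp]: "x \<in> obj X \<Longrightarrow> dom2 Y (funit F x) = unit1 Y (fmap0 F x)"
  using funit_typed unfolding cell_def by metis
lemma funit_cod[simp]: "x \<in> obj X \<Longrightarrow> cod2 Y (funit F x) = fmap1 F (unit1 X x)"
  using funit_typed unfolding cell_def by metis
lemma finv_arr[simp]: "f \<in> arr1 X \<Longrightarrow> finv F f \<in> arr2 Y" using finv_typed unfolding cell_def by metis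
lemma finv_dom[simp]: "f \<in> arr1 X \<Longrightarrow> dom2 Y (finv F f) = inv1 Y (fmap1 F f)"
  using finv_typed unfolding cell_def by metis
lemma finv_cod[simp]: "f \<in> arr1 X \<Longrightarrow> cod2 Y (finv F f) = fmap1 F (inv1 X f)"
  using finv_typed unfolding cell_def by metis
lemma finv_nat: "\<alpha> \<in> arr2 X \<Longrightarrow> vcomp Y (finv F (cod2 X \<alpha>)) (inv2 Y (fmap2 F \<alpha>)) =
        vcomp Y (fmap2 F (inv2 X \<alpha>)) (finv F (dom2 X \<alpha>))" using finv_natural by metis
lemma coh_assoc: "f \<in> arr1 X \<Longrightarrow> g \<in> arr1 X \<Longrightarrow> h \<in> arr1 X \<Longrightarrow> src1 X g = tgt1 X f \<Longrightarrow> src1 X h = tgt1 X g \<Longrightarrow>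
        vcomp Y (fmap2 F (assoc X h g f))
          (vcomp Y (fcmp F (hcomp1 X h g) f) (hcomp2 Y (fcmp F h g) (vid Y (fmap1 F f)))) =
        vcomp Y (fcmp F h (hcomp1 X g f))
          (vcomp Y (hcomp2 Y (vid Y (fmap1 F h)) (fcmp F g f))
            (assoc Y (fmap1 F h) (fmap1 F g) (fmap1 F f)))" using assoc_coherent by metis
lemma coh_runit: "f \<in> arr1 X \<Longrightarrow>
        vcomp Y (fmap2 F (runit X f))
          (vcomp Y (fcmp F f (unit1 X (src1 X f))) (hcomp2 Y (vid Y (fmap1 F f)) (funit F (src1 X f)))) =
        runit Y (fmap1 F f)" using runit_coherent by metis
lemma coh_lunit: "f \<in> arr1 X \<Longrightarrow>
        vcomp Y (fmap2 F (lunit X f))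
          (vcomp Y (fcmp F (unit1 X (tgt1 X f)) f) (hcomp2 Y (funit F (tgt1 X f)) (vid Y (fmap1 F f)))) =
        lunit Y (fmap1 F f)" using lunit_coherent by metis
lemma coh_ecell: "f \<in> arr1 X \<Longrightarrow>
        vcomp Y (fmap2 F (ecell X f))
          (vcomp Y (fcmp F (inv1 X f) f) (hcomp2 Y (finv F f) (vid Y (fmap1 F f)))) =
        vcomp Y (funit F (src1 X f)) (ecell Y (fmap1 F f))" using ecell_coherent by metis
lemma coh_icell: "f \<in> arr1 X \<Longrightarrow>
        vcomp Y (fmap2 F (icell X f)) (funit F (tgt1 X f)) =
        vcomp Y (fcmp F f (inv1 X f))
          (vcomp Y (hcomp2 Y (vid Y (fmap1 F f)) (finv F f)) (icell Y (fmap1 F f)))" using icell_coherent by metis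

lemma fmap2_vcomp_eq_vid:
  assumes "vcomp X \<beta> \<alpha> = vid X f" "\<alpha> \<in> arr2 X" "\<beta> \<in> arr2 X" "cod2 X \<alpha> = dom2 X \<beta>" "f \<in> arr1 X"
  shows "vcomp Y (fmap2 F \<beta>) (fmap2 F \<alpha>) = vid Y (fmap1 F f)"
  using assms by (metis fmap2_vcomp fmap2_vid)

lemma fmap2_hcomp2_eq: assumes a: "\<alpha> \<in> arr2 X" and b: "\<beta> \<in> arr2 X" and ab: "src1 X (dom2 X \<beta>) = tgt1 X (dom2 X \<alpha>)"
  shows "fmap2 F (hcomp2 X \<beta> \<alpha>) = vcomp Y (fcmp F (cod2 X \<beta>) (cod2 X \<alpha>))
     (vcomp Y (hcomp2 Y (fmap2 F \<beta>) (fmap2 F \<alpha>)) (vinv Y (fcmp F (dom2 X \<beta>) (dom2 X \<alpha>))))"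
  using Y.vcomp_solve[OF fcmp_nat[OF assms, symmetric]] assms by simp

lemma fmap2_inv2_eq: assumes a: "\<alpha> \<in> arr2 X"
  shows "fmap2 F (inv2 X \<alpha>) = vcomp Y (finv F (cod2 X \<alpha>)) (vcomp Y (inv2 Y (fmap2 F \<alpha>)) (vinv Y (finv F (dom2 X \<alpha>))))"
  using Y.vcomp_solve[OF finv_nat[OF assms, symmetric]] assms by simp

lemma fmap2_assoc_eq: assumes "f \<in> arr1 X" "g \<in> arr1 X" "h \<in> arr1 X" "src1 X g = tgt1 X f" "src1 X h = tgt1 X g"
  shows "fmap2 F (assoc X h g f) = vcomp Y (fcmp F h (hcomp1 X g f))
          (vcomp Y (hcomp2 Y (vid Y (fmap1 F h)) (fcmp F g f))
            (vcomp Y (assoc Y (fmap1 F h) (fmap1 F g) (fmap1 F f))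
              (vcomp Y (hcomp2 Y (vinv Y (fcmp F h g)) (vid Y (fmap1 F f))) (vinv Y (fcmp F (hcomp1 X h g) f)))))"
  using Y.vcomp_solve[OF coh_assoc[OF assms]] assms by simp

lemma fmap2_runit_eq: assumes "f \<in> arr1 X"
  shows "fmap2 F (runit X f) = vcomp Y (runit Y (fmap1 F f))
     (vcomp Y (hcomp2 Y (vid Y (fmap1 F f)) (vinv Y (funit F (src1 X f)))) (vinv Y (fcmp F f (unit1 X (src1 X f)))))"
  using Y.vcomp_solve[OF coh_runit[OF assms]] assms by simp

lemma fmap2_lunit_eq: assumes "f \<in> arr1 X"
  shows "fmap2 F (lunit X f) = vcomp Y (lunit Y (fmap1 F f))
     (vcomp Y (hcomp2 Y (vinv Y (funit F (tgt1 X f))) (vid Y (fmap1 F f))) (vinv Y (fcmp F (unit1 X (tgt1 X f)) f)))"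
  using Y.vcomp_solve[OF coh_lunit[OF assms]] assms by simp

lemma fmap2_ecell_eq: assumes "f \<in> arr1 X"
  shows "fmap2 F (ecell X f) = vcomp Y (funit F (src1 X f)) (vcomp Y (ecell Y (fmap1 F f))
     (vcomp Y (hcomp2 Y (vinv Y (finv F f)) (vid Y (fmap1 F f))) (vinv Y (fcmp F (inv1 X f) f))))"
  using Y.vcomp_solve[OF coh_ecell[OF assms]] assms by simp

lemma fmap2_icell_eq: assumes "f \<in> arr1 X"
  shows "fmap2 F (icell X f) = vcomp Y (fcmp F f (inv1 X f))
          (vcomp Y (hcomp2 Y (vid Y (fmap1 F f)) (finv F f)) (vcomp Y (icell Y (fmap1 F f)) (vinv Y (funit F (tgt1 X f)))))"
  using Y.vcomp_solve[OF coh_icell[OF assms]] assms by simp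

end

locale bgpd_morphism_comp = F: bgpd_morphism X Y F + G: bgpd_morphism Y Z G
  for X :: "('o,'a,'c,'z) bigroupoid_scheme" and Y :: "('p,'b,'d,'y) bigroupoid_scheme"
    and Z :: "('q,'e,'g,'x) bigroupoid_scheme"
    and F :: "('o,'a,'c,'p,'b,'d) bimorph" and G :: "('p,'b,'d,'q,'e,'g) bimorph"
begin

lemma comp_assoc_coherent:
  assumes f: "f \<in> arr1 X" and g: "g \<in> arr1 X" and h: "h \<in> arr1 X"
    and gf: "src1 X g = tgt1 X f" and hg: "src1 X h = tgt1 X g"
  shows "vcomp Z (fmap2 G (fmap2 F (assoc X h g f)))
          (vcomp Z (vcomp Z (fmap2 G (fcmp F (hcomp1 X h g) f)) (fcmp G (fmap1 F (hcomp1 X h g)) (fmap1 F f)))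
             (hcomp2 Z (vcomp Z (fmap2 G (fcmp F h g)) (fcmp G (fmap1 F h) (fmap1 F g))) (vid Z (fmap1 G (fmap1 F f))))) =
        vcomp Z (vcomp Z (fmap2 G (fcmp F h (hcomp1 X g f))) (fcmp G (fmap1 F h) (fmap1 F (hcomp1 X g f))))
          (vcomp Z (hcomp2 Z (vid Z (fmap1 G (fmap1 F h))) (vcomp Z (fmap2 G (fcmp F g f)) (fcmp G (fmap1 F g) (fmap1 F f))))
            (assoc Z (fmap1 G (fmap1 F h)) (fmap1 G (fmap1 F g)) (fmap1 G (fmap1 F f))))"
proof -
  let ?Ff = "fmap1 F f" and ?Fg = "fmap1 F g" and ?Fh = "fmap1 F h"
  let ?\<phi>1 = "fcmp F (hcomp1 X h g) f" and ?\<gamma>1 = "fcmp G (fmap1 F (hcomp1 X h g)) (fmap1 F f)"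
  let ?\<phi>2 = "fcmp F h g" and ?\<gamma>2 = "fcmp G (fmap1 F h) (fmap1 F g)"
  let ?\<phi>3 = "fcmp F h (hcomp1 X g f)" and ?\<gamma>3 = "fcmp G (fmap1 F h) (fmap1 F (hcomp1 X g f))"
  let ?\<phi>4 = "fcmp F g f" and ?\<gamma>4 = "fcmp G (fmap1 F g) (fmap1 F f)"
  let ?\<gamma>' = "fcmp G (hcomp1 Y ?Fh ?Fg) ?Ff" and ?\<gamma>'' = "fcmp G ?Fh (hcomp1 Y ?Fg ?Ff)"
  have n1: "vcomp Z ?\<gamma>1 (hcomp2 Z (fmap2 G ?\<phi>2) (vid Z (fmap1 G ?Ff))) = vcomp Z (fmap2 G (hcomp2 Y ?\<phi>2 (vid Y ?Ff))) ?\<gamma>'"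
    using G.fcmp_nat[of "vid Y ?Ff" ?\<phi>2] assms by simp
  have cF: "vcomp Z (fmap2 G (fmap2 F (assoc X h g f))) (vcomp Z (fmap2 G ?\<phi>1) (fmap2 G (hcomp2 Y ?\<phi>2 (vid Y ?Ff))))
     = vcomp Z (fmap2 G ?\<phi>3) (vcomp Z (fmap2 G (hcomp2 Y (vid Y ?Fh) ?\<phi>4)) (fmap2 G (assoc Y ?Fh ?Fg ?Ff)))"
    using arg_cong[OF F.coh_assoc[OF assms], of "fmap2 G"] assms by simp
  have cG: "vcomp Z (fmap2 G (assoc Y ?Fh ?Fg ?Ff)) (vcomp Z ?\<gamma>' (hcomp2 Z ?\<gamma>2 (vid Z (fmap1 G ?Ff))))
     = vcomp Z ?\<gamma>'' (vcomp Z (hcomp2 Z (vid Z (fmap1 G ?Fh)) ?\<gamma>4) (assoc Z (fmap1 G ?Fh) (fmap1 G ?Fg) (fmap1 G ?Ff)))"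
    using G.coh_assoc[of ?Ff ?Fg ?Fh] assms by simp
  have n2: "vcomp Z ?\<gamma>3 (hcomp2 Z (vid Z (fmap1 G ?Fh)) (fmap2 G ?\<phi>4)) = vcomp Z (fmap2 G (hcomp2 Y (vid Y ?Fh) ?\<phi>4)) ?\<gamma>''"
    using G.fcmp_nat[of ?\<phi>4 "vid Y ?Fh"] assms by simp
  show ?thesis using assms
    by (simp add: G.Y.whisker_left_vcomp G.Y.whisker_right_vcomp G.Y.vcomp_reassoc[OF n1]
      G.Y.vcomp_reassoc3[OF cF] cG G.Y.vcomp_reassoc[OF n2[symmetric]])
qed

lemma comp_runit_coherent:
  assumes f: "f \<in> arr1 X"
  shows "vcomp Z (fmap2 G (fmap2 F (runit X f)))
          (vcomp Z (vcomp Z (fmap2 G (fcmp F f (unit1 X (src1 X f)))) (fcmp G (fmap1 F f) (fmap1 F (unit1 X (src1 X f)))))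
            (hcomp2 Z (vid Z (fmap1 G (fmap1 F f))) (vcomp Z (fmap2 G (funit F (src1 X f))) (funit G (fmap0 F (src1 X f)))))) =
        runit Z (fmap1 G (fmap1 F f))"
proof -
  let ?Ff = "fmap1 F f" and ?x = "src1 X f"
  let ?u = "funit F ?x" and ?u' = "funit G (fmap0 F ?x)"
  have n1: "vcomp Z (fcmp G ?Ff (fmap1 F (unit1 X ?x))) (hcomp2 Z (vid Z (fmap1 G ?Ff)) (fmap2 G ?u))
     = vcomp Z (fmap2 G (hcomp2 Y (vid Y ?Ff) ?u)) (fcmp G ?Ff (unit1 Y (fmap0 F ?x)))"
    using G.fcmp_nat[of ?u "vid Y ?Ff"] assms by simp
  have cF: "vcomp Z (fmap2 G (fmap2 F (runit X f))) (vcomp Z (fmap2 G (fcmp F f (unit1 X ?x)))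
      (fmap2 G (hcomp2 Y (vid Y ?Ff) ?u)))
     = fmap2 G (runit Y ?Ff)"
    using arg_cong[OF F.coh_runit[OF assms], of "fmap2 G"] assms by simp
  have cG: "vcomp Z (fmap2 G (runit Y ?Ff)) (vcomp Z (fcmp G ?Ff (unit1 Y (fmap0 F ?x))) (hcomp2 Z (vid Z (fmap1 G ?Ff)) ?u'))
     = runit Z (fmap1 G ?Ff)"
    using G.coh_runit[of ?Ff] assms by simp
  show ?thesis using assms
    by (simp add: G.Y.whisker_left_vcomp G.Y.vcomp_reassoc[OF n1] G.Y.vcomp_reassoc3[OF cF] cG)
qed

lemma comp_lunit_coherent:
  assumes f: "f \<in> arr1 X"
  shows "vcomp Z (fmap2 G (fmap2 F (lunit X f)))
          (vcomp Z (vcomp Z (fmap2 G (fcmp F (unit1 X (tgt1 X f)) f)) (fcmp G (fmap1 F (unit1 X (tgt1 X f))) (fmap1 F f)))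
            (hcomp2 Z (vcomp Z (fmap2 G (funit F (tgt1 X f))) (funit G (fmap0 F (tgt1 X f)))) (vid Z (fmap1 G (fmap1 F f))))) =
        lunit Z (fmap1 G (fmap1 F f))"
proof -
  let ?Ff = "fmap1 F f" and ?x = "tgt1 X f"
  let ?u = "funit F ?x" and ?u' = "funit G (fmap0 F ?x)"
  have n1: "vcomp Z (fcmp G (fmap1 F (unit1 X ?x)) ?Ff) (hcomp2 Z (fmap2 G ?u) (vid Z (fmap1 G ?Ff)))
     = vcomp Z (fmap2 G (hcomp2 Y ?u (vid Y ?Ff))) (fcmp G (unit1 Y (fmap0 F ?x)) ?Ff)"
    using G.fcmp_nat[of "vid Y ?Ff" ?u] assms by simp
  have cF: "vcomp Z (fmap2 G (fmap2 F (lunit X f))) (vcomp Z (fmap2 G (fcmp F (unit1 X ?x) f))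
      (fmap2 G (hcomp2 Y ?u (vid Y ?Ff))))
     = fmap2 G (lunit Y ?Ff)"
    using arg_cong[OF F.coh_lunit[OF assms], of "fmap2 G"] assms by simp
  have cG: "vcomp Z (fmap2 G (lunit Y ?Ff)) (vcomp Z (fcmp G (unit1 Y (fmap0 F ?x)) ?Ff) (hcomp2 Z ?u' (vid Z (fmap1 G ?Ff))))
     = lunit Z (fmap1 G ?Ff)"
    using G.coh_lunit[of ?Ff] assms by simp
  show ?thesis using assms
    by (simp add: G.Y.whisker_right_vcomp G.Y.vcomp_reassoc[OF n1] G.Y.vcomp_reassoc3[OF cF] cG)
qed

lemma comp_ecell_coherent:
  assumes f: "f \<in> arr1 X"
  shows "vcomp Z (fmap2 G (fmap2 F (ecell X f)))
          (vcomp Z (vcomp Z (fmap2 G (fcmp F (inv1 X f) f)) (fcmp G (fmap1 F (inv1 X f)) (fmap1 F f)))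
            (hcomp2 Z (vcomp Z (fmap2 G (finv F f)) (finv G (fmap1 F f))) (vid Z (fmap1 G (fmap1 F f))))) =
        vcomp Z (vcomp Z (fmap2 G (funit F (src1 X f))) (funit G (fmap0 F (src1 X f)))) (ecell Z (fmap1 G (fmap1 F f)))"
proof -
  let ?Ff = "fmap1 F f" and ?x = "src1 X f"
  let ?u = "funit F ?x" and ?u' = "funit G (fmap0 F ?x)"
  have n1: "vcomp Z (fcmp G (fmap1 F (inv1 X f)) ?Ff) (hcomp2 Z (fmap2 G (finv F f)) (vid Z (fmap1 G ?Ff)))
     = vcomp Z (fmap2 G (hcomp2 Y (finv F f) (vid Y ?Ff))) (fcmp G (inv1 Y ?Ff) ?Ff)"
    using G.fcmp_nat[of "vid Y ?Ff" "finv F f"] assms by simp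
  have cF: "vcomp Z (fmap2 G (fmap2 F (ecell X f))) (vcomp Z (fmap2 G (fcmp F (inv1 X f) f))
      (fmap2 G (hcomp2 Y (finv F f) (vid Y ?Ff))))
     = vcomp Z (fmap2 G ?u) (fmap2 G (ecell Y ?Ff))"
    using arg_cong[OF F.coh_ecell[OF assms], of "fmap2 G"] assms by simp
  have cG: "vcomp Z (fmap2 G (ecell Y ?Ff)) (vcomp Z (fcmp G (inv1 Y ?Ff) ?Ff) (hcomp2 Z (finv G ?Ff) (vid Z (fmap1 G ?Ff))))
     = vcomp Z ?u' (ecell Z (fmap1 G ?Ff))"
    using G.coh_ecell[of ?Ff] assms by simp
  show ?thesis using assms
    by (simp add: G.Y.whisker_right_vcomp G.Y.vcomp_reassoc[OF n1] G.Y.vcomp_reassoc3[OF cF] cG)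
qed

lemma comp_icell_coherent:
  assumes f: "f \<in> arr1 X"
  shows "vcomp Z (fmap2 G (fmap2 F (icell X f))) (vcomp Z (fmap2 G (funit F (tgt1 X f))) (funit G (fmap0 F (tgt1 X f)))) =
        vcomp Z (vcomp Z (fmap2 G (fcmp F f (inv1 X f))) (fcmp G (fmap1 F f) (fmap1 F (inv1 X f))))
          (vcomp Z (hcomp2 Z (vid Z (fmap1 G (fmap1 F f))) (vcomp Z (fmap2 G (finv F f)) (finv G (fmap1 F f))))
            (icell Z (fmap1 G (fmap1 F f))))"
proof -
  let ?Ff = "fmap1 F f" and ?x = "tgt1 X f"
  let ?u = "funit F ?x" and ?u' = "funit G (fmap0 F ?x)"
  have n: "vcomp Z (fcmp G ?Ff (fmap1 F (inv1 X f))) (hcomp2 Z (vid Z (fmap1 G ?Ff)) (fmap2 G (finv F f)))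
     = vcomp Z (fmap2 G (hcomp2 Y (vid Y ?Ff) (finv F f))) (fcmp G ?Ff (inv1 Y ?Ff))"
    using G.fcmp_nat[of "finv F f" "vid Y ?Ff"] assms by simp
  have cF: "vcomp Z (fmap2 G (fmap2 F (icell X f))) (fmap2 G ?u)
     = vcomp Z (fmap2 G (fcmp F f (inv1 X f))) (vcomp Z (fmap2 G (hcomp2 Y (vid Y ?Ff) (finv F f))) (fmap2 G (icell Y ?Ff)))"
    using arg_cong[OF F.coh_icell[OF assms], of "fmap2 G"] assms by simp
  have cG: "vcomp Z (fmap2 G (icell Y ?Ff)) ?u'
     = vcomp Z (fcmp G ?Ff (inv1 Y ?Ff)) (vcomp Z (hcomp2 Z (vid Z (fmap1 G ?Ff)) (finv G ?Ff)) (icell Z (fmap1 G ?Ff)))"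
    using G.coh_icell[of ?Ff] assms by simp
  show ?thesis using assms
    by (simp add: G.Y.whisker_left_vcomp G.Y.vcomp_reassoc[OF cF] cG G.Y.vcomp_reassoc[OF n[symmetric]])
qed

lemma comp_fcmp_nat:
  assumes a: "\<alpha> \<in> arr2 X" and b: "\<beta> \<in> arr2 X" and ab: "src1 X (dom2 X \<beta>) = tgt1 X (dom2 X \<alpha>)"
  shows "vcomp Z (vcomp Z (fmap2 G (fcmp F (cod2 X \<beta>) (cod2 X \<alpha>))) (fcmp G (fmap1 F (cod2 X \<beta>)) (fmap1 F (cod2 X \<alpha>))))
            (hcomp2 Z (fmap2 G (fmap2 F \<beta>)) (fmap2 G (fmap2 F \<alpha>))) =
         vcomp Z (fmap2 G (fmap2 F (hcomp2 X \<beta> \<alpha>)))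
            (vcomp Z (fmap2 G (fcmp F (dom2 X \<beta>) (dom2 X \<alpha>))) (fcmp G (fmap1 F (dom2 X \<beta>)) (fmap1 F (dom2 X \<alpha>))))"
proof -
  have nG: "vcomp Z (fcmp G (fmap1 F (cod2 X \<beta>)) (fmap1 F (cod2 X \<alpha>))) (hcomp2 Z (fmap2 G (fmap2 F \<beta>)) (fmap2 G (fmap2 F \<alpha>)))
     = vcomp Z (fmap2 G (hcomp2 Y (fmap2 F \<beta>) (fmap2 F \<alpha>))) (fcmp G (fmap1 F (dom2 X \<beta>)) (fmap1 F (dom2 X \<alpha>)))"
    using G.fcmp_nat[of "fmap2 F \<alpha>" "fmap2 F \<beta>"] assms by simp
  have nF: "vcomp Z (fmap2 G (fcmp F (cod2 X \<beta>) (cod2 X \<alpha>))) (fmap2 G (hcomp2 Y (fmap2 F \<beta>) (fmap2 F \<alpha>)))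
     = vcomp Z (fmap2 G (fmap2 F (hcomp2 X \<beta> \<alpha>))) (fmap2 G (fcmp F (dom2 X \<beta>) (dom2 X \<alpha>)))"
    using arg_cong[OF F.fcmp_nat[OF assms], of "fmap2 G"] assms by simp
  show ?thesis using assms by (simp add: nG G.Y.vcomp_reassoc[OF nF])
qed

lemma comp_finv_nat:
  assumes a: "\<alpha> \<in> arr2 X"
  shows "vcomp Z (vcomp Z (fmap2 G (finv F (cod2 X \<alpha>))) (finv G (fmap1 F (cod2 X \<alpha>)))) (inv2 Z (fmap2 G (fmap2 F \<alpha>))) =
        vcomp Z (fmap2 G (fmap2 F (inv2 X \<alpha>))) (vcomp Z (fmap2 G (finv F (dom2 X \<alpha>))) (finv G (fmap1 F (dom2 X \<alpha>))))"
proof -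
  have nG: "vcomp Z (finv G (fmap1 F (cod2 X \<alpha>))) (inv2 Z (fmap2 G (fmap2 F \<alpha>)))
     = vcomp Z (fmap2 G (inv2 Y (fmap2 F \<alpha>))) (finv G (fmap1 F (dom2 X \<alpha>)))"
    using G.finv_nat[of "fmap2 F \<alpha>"] assms by simp
  have nF: "vcomp Z (fmap2 G (finv F (cod2 X \<alpha>))) (fmap2 G (inv2 Y (fmap2 F \<alpha>)))
     = vcomp Z (fmap2 G (fmap2 F (inv2 X \<alpha>))) (fmap2 G (finv F (dom2 X \<alpha>)))"
    using arg_cong[OF F.finv_nat[OF assms], of "fmap2 G"] assms by simp
  show ?thesis using assms by (simp add: nG G.Y.vcomp_reassoc[OF nF])
qed
lemma bimorphism_comp: "bimorphism X Z (bm_comp Z G F)"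
  unfolding bimorphism_def bm_comp_def bimorph.simps comp_apply
  apply (intro conjI ballI impI)
  using F.X.is_bigroupoid G.Y.is_bigroupoid comp_fcmp_nat comp_finv_nat comp_assoc_coherent
      comp_runit_coherent comp_lunit_coherent
    comp_ecell_coherent comp_icell_coherent
  by (simp_all add: cell_def)

end

definition transport ::
  "('o,'a,'c,'z) bigroupoid_scheme \<Rightarrow> ('p,'b,'d,'y) bigroupoid_scheme \<Rightarrow>
   ('o,'a,'c,'p,'b,'d) bimorph \<Rightarrow> ('a \<Rightarrow> 'd) \<Rightarrow> ('o,'a,'c,'p,'b,'d) bimorph" where
  "transport X Y M \<theta> =
   \<lparr> fmap0 = fmap0 M,
     fmap1 = (\<lambda>x. dom2 Y (\<theta> x)),
     fmap2 = (\<lambda>\<alpha>. vcomp Y (vinv Y (\<theta> (cod2 X \<alpha>))) (vcomp Y (fmap2 M \<alpha>) (\<theta> (dom2 X \<alpha>)))),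
     fcmp = (\<lambda>g f. vcomp Y (vinv Y (\<theta> (hcomp1 X g f))) (vcomp Y (fcmp M g f) (hcomp2 Y (\<theta> g) (\<theta> f)))),
     funit = (\<lambda>x. vcomp Y (vinv Y (\<theta> (unit1 X x))) (funit M x)),
     finv = (\<lambda>f. vcomp Y (vinv Y (\<theta> (inv1 X f))) (vcomp Y (finv M f) (inv2 Y (\<theta> f)))) \<rparr>"

locale bgpd_transport = bgpd_morphism X Y M
  for X :: "('o,'a,'c,'z) bigroupoid_scheme" and Y :: "('p,'b,'d,'y) bigroupoid_scheme"
    and M :: "('o,'a,'c,'p,'b,'d) bimorph" +
  fixes \<theta> :: "'a \<Rightarrow> 'd"
  assumes theta_arr[simp]: "x \<in> arr1 X \<Longrightarrow> \<theta> x \<in> arr2 Y"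
    and theta_cod[simp]: "x \<in> arr1 X \<Longrightarrow> cod2 Y (\<theta> x) = fmap1 M x"
begin

lemma theta_dom_src[simp]: "x \<in> arr1 X \<Longrightarrow> src1 Y (dom2 Y (\<theta> x)) = fmap0 M (src1 X x)"
  by (metis Y.src_cod theta_arr theta_cod fmap1_src)
lemma theta_dom_tgt[simp]: "x \<in> arr1 X \<Longrightarrow> tgt1 Y (dom2 Y (\<theta> x)) = fmap0 M (tgt1 X x)"
  by (metis Y.tgt_cod theta_arr theta_cod fmap1_tgt)

abbreviation (input) "tr1 x \<equiv> dom2 Y (\<theta> x)"
abbreviation (input) "tr2 \<alpha> \<equiv> vcomp Y (vinv Y (\<theta> (cod2 X \<alpha>))) (vcomp Y (fmap2 M \<alpha>) (\<theta> (dom2 X \<alpha>)))"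
abbreviation (input) "trcmp g f \<equiv> vcomp Y (vinv Y (\<theta> (hcomp1 X g f))) (vcomp Y (fcmp M g f) (hcomp2 Y (\<theta> g) (\<theta> f)))"
abbreviation (input) "trunit x \<equiv> vcomp Y (vinv Y (\<theta> (unit1 X x))) (funit M x)"
abbreviation (input) "trinv f \<equiv> vcomp Y (vinv Y (\<theta> (inv1 X f))) (vcomp Y (finv M f) (inv2 Y (\<theta> f)))"

lemma transport_fcmp_nat:
  assumes a: "\<alpha> \<in> arr2 X" and b: "\<beta> \<in> arr2 X" and ab: "src1 X (dom2 X \<beta>) = tgt1 X (dom2 X \<alpha>)"
  shows "vcomp Y (trcmp (cod2 X \<beta>) (cod2 X \<alpha>)) (hcomp2 Y (tr2 \<beta>) (tr2 \<alpha>)) =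
    vcomp Y (tr2 (hcomp2 X \<beta> \<alpha>)) (trcmp (dom2 X \<beta>) (dom2 X \<alpha>))"
proof -
  have m: "vcomp Y (hcomp2 Y (\<theta> (cod2 X \<beta>)) (\<theta> (cod2 X \<alpha>)))
      (hcomp2 Y (vcomp Y (vinv Y (\<theta> (cod2 X \<beta>))) (vcomp Y (fmap2 M \<beta>) (\<theta> (dom2 X \<beta>))))
                (vcomp Y (vinv Y (\<theta> (cod2 X \<alpha>))) (vcomp Y (fmap2 M \<alpha>) (\<theta> (dom2 X \<alpha>)))))
     = vcomp Y (hcomp2 Y (fmap2 M \<beta>) (fmap2 M \<alpha>)) (hcomp2 Y (\<theta> (dom2 X \<beta>)) (\<theta> (dom2 X \<alpha>)))"
    using assms by (simp add: Y.interchange[symmetric] del: Y.vassoc)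
  show ?thesis using assms by (simp add: m Y.vcomp_reassoc[OF m] Y.vcomp_reassoc[OF fcmp_nat[OF assms]])
qed

lemma transport_finv_nat:
  assumes a: "\<alpha> \<in> arr2 X"
  shows "vcomp Y (trinv (cod2 X \<alpha>)) (inv2 Y (tr2 \<alpha>)) = vcomp Y (tr2 (inv2 X \<alpha>)) (trinv (dom2 X \<alpha>))"
  using assms by (simp add: Y.vinv_inv2[symmetric] finv_nat Y.vcomp_reassoc[OF finv_nat[OF a]])

lemma transport_assoc_coherent:
  assumes f: "f \<in> arr1 X" and g: "g \<in> arr1 X" and h: "h \<in> arr1 X"
    and gf: "src1 X g = tgt1 X f" and hg: "src1 X h = tgt1 X g"
  shows "vcomp Y (tr2 (assoc X h g f)) (vcomp Y (trcmp (hcomp1 X h g) f) (hcomp2 Y (trcmp h g) (vid Y (tr1 f)))) =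
    vcomp Y (trcmp h (hcomp1 X g f)) (vcomp Y (hcomp2 Y (vid Y (tr1 h)) (trcmp g f)) (assoc Y (tr1 h) (tr1 g) (tr1 f)))"
proof -
  let ?Ma = "fmap2 M (assoc X h g f)" and ?\<phi>1 = "fcmp M (hcomp1 X h g) f" and ?\<phi>2 = "fcmp M h g"
    and ?\<phi>3 = "fcmp M h (hcomp1 X g f)" and ?\<phi>4 = "fcmp M g f"
  have K: "vcomp Y ?Ma (vcomp Y ?\<phi>1 (hcomp2 Y (vcomp Y ?\<phi>2 (hcomp2 Y (\<theta> h) (\<theta> g))) (\<theta> f)))
      = vcomp Y ?\<phi>3 (vcomp Y (hcomp2 Y (\<theta> h) (vcomp Y ?\<phi>4 (hcomp2 Y (\<theta> g) (\<theta> f)))) (assoc Y (tr1 h) (tr1 g) (tr1 f)))"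
  proof -
    have i1: "hcomp2 Y (vcomp Y ?\<phi>2 (hcomp2 Y (\<theta> h) (\<theta> g))) (\<theta> f) =
        vcomp Y (hcomp2 Y ?\<phi>2 (vid Y (fmap1 M f))) (hcomp2 Y (hcomp2 Y (\<theta> h) (\<theta> g)) (\<theta> f))"
      using Y.interchange[of "\<theta> f" "vid Y (fmap1 M f)" "hcomp2 Y (\<theta> h) (\<theta> g)" ?\<phi>2] assms by simp
    have an: "vcomp Y (assoc Y (fmap1 M h) (fmap1 M g) (fmap1 M f)) (hcomp2 Y (hcomp2 Y (\<theta> h) (\<theta> g)) (\<theta> f)) =
        vcomp Y (hcomp2 Y (\<theta> h) (hcomp2 Y (\<theta> g) (\<theta> f))) (assoc Y (tr1 h) (tr1 g) (tr1 f))"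
      using Y.assoc_nat[of "\<theta> f" "\<theta> g" "\<theta> h"] assms by simp
    have i2: "vcomp Y (hcomp2 Y (vid Y (fmap1 M h)) ?\<phi>4) (hcomp2 Y (\<theta> h) (hcomp2 Y (\<theta> g) (\<theta> f))) =
        hcomp2 Y (\<theta> h) (vcomp Y ?\<phi>4 (hcomp2 Y (\<theta> g) (\<theta> f)))"
      using Y.interchange[of "hcomp2 Y (\<theta> g) (\<theta> f)" ?\<phi>4 "\<theta> h" "vid Y (fmap1 M h)"] assms by simp
    show ?thesis using assms
      by (simp add: i1 Y.vcomp_reassoc3[OF coh_assoc[OF assms]] an Y.vcomp_reassoc[OF i2])
  qed
  show ?thesis using assms
    by (simp add: Y.interchange[symmetric] Y.vcomp_reassoc[OF Y.interchange[symmetric]] K)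
qed

lemma transport_runit_coherent:
  assumes f: "f \<in> arr1 X"
  shows "vcomp Y (tr2 (runit X f)) (vcomp Y (trcmp f (unit1 X (src1 X f))) (hcomp2 Y (vid Y (tr1 f)) (trunit (src1 X f)))) =
    runit Y (tr1 f)"
proof -
  let ?u = "funit M (src1 X f)"
  have K: "vcomp Y (fmap2 M (runit X f)) (vcomp Y (fcmp M f (unit1 X (src1 X f)))
      (hcomp2 Y (\<theta> f) ?u)) = vcomp Y (\<theta> f) (runit Y (tr1 f))"
  proof -
    have i1: "hcomp2 Y (\<theta> f) ?u = vcomp Y (hcomp2 Y (vid Y (fmap1 M f)) ?u) (hcomp2 Y (\<theta> f)
        (vid Y (unit1 Y (fmap0 M (src1 X f)))))"
      using Y.interchange[of "vid Y (unit1 Y (fmap0 M (src1 X f)))" ?u "\<theta> f" "vid Y (fmap1 M f)"] assms by simp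
    have rn: "vcomp Y (runit Y (fmap1 M f)) (hcomp2 Y (\<theta> f)
        (vid Y (unit1 Y (fmap0 M (src1 X f))))) = vcomp Y (\<theta> f) (runit Y (tr1 f))"
      using Y.runit_nat[of "\<theta> f"] assms by simp
    show ?thesis using assms by (simp add: i1 Y.vcomp_reassoc3[OF coh_runit[OF assms]] rn)
  qed
  show ?thesis using assms
    by (simp add: Y.interchange[symmetric] Y.vcomp_reassoc[OF Y.interchange[symmetric]] K)
qed

lemma transport_lunit_coherent:
  assumes f: "f \<in> arr1 X"
  shows "vcomp Y (tr2 (lunit X f)) (vcomp Y (trcmp (unit1 X (tgt1 X f)) f) (hcomp2 Y (trunit (tgt1 X f)) (vid Y (tr1 f)))) =
    lunit Y (tr1 f)"
proof -
  let ?u = "funit M (tgt1 X f)"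
  have K: "vcomp Y (fmap2 M (lunit X f)) (vcomp Y (fcmp M (unit1 X (tgt1 X f)) f)
      (hcomp2 Y ?u (\<theta> f))) = vcomp Y (\<theta> f) (lunit Y (tr1 f))"
  proof -
    have i1: "hcomp2 Y ?u (\<theta> f) = vcomp Y (hcomp2 Y ?u (vid Y (fmap1 M f)))
        (hcomp2 Y (vid Y (unit1 Y (fmap0 M (tgt1 X f)))) (\<theta> f))"
      using Y.interchange[of "\<theta> f" "vid Y (fmap1 M f)" "vid Y (unit1 Y (fmap0 M (tgt1 X f)))" ?u] assms by simp
    have rn: "vcomp Y (lunit Y (fmap1 M f)) (hcomp2 Y (vid Y (unit1 Y (fmap0 M (tgt1 X f))))
        (\<theta> f)) = vcomp Y (\<theta> f) (lunit Y (tr1 f))"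
      using Y.lunit_nat[of "\<theta> f"] assms by simp
    show ?thesis using assms by (simp add: i1 Y.vcomp_reassoc3[OF coh_lunit[OF assms]] rn)
  qed
  show ?thesis using assms
    by (simp add: Y.interchange[symmetric] Y.vcomp_reassoc[OF Y.interchange[symmetric]] K)
qed

lemma transport_ecell_coherent:
  assumes f: "f \<in> arr1 X"
  shows "vcomp Y (tr2 (ecell X f)) (vcomp Y (trcmp (inv1 X f) f) (hcomp2 Y (trinv f) (vid Y (tr1 f)))) =
    vcomp Y (trunit (src1 X f)) (ecell Y (tr1 f))"
proof -
  have K: "vcomp Y (fmap2 M (ecell X f)) (vcomp Y (fcmp M (inv1 X f) f) (hcomp2 Y (vcomp Y (finv M f) (inv2 Y (\<theta> f))) (\<theta> f)))
      = vcomp Y (funit M (src1 X f)) (ecell Y (tr1 f))"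
  proof -
    have i1: "hcomp2 Y (vcomp Y (finv M f) (inv2 Y (\<theta> f))) (\<theta> f) = vcomp Y (hcomp2 Y (finv M f)
        (vid Y (fmap1 M f))) (hcomp2 Y (inv2 Y (\<theta> f)) (\<theta> f))"
      using Y.interchange[of "\<theta> f" "vid Y (fmap1 M f)" "inv2 Y (\<theta> f)" "finv M f"] assms by simp
    have rn: "vcomp Y (ecell Y (fmap1 M f)) (hcomp2 Y (inv2 Y (\<theta> f)) (\<theta> f)) = ecell Y (tr1 f)"
      using Y.ecell_nat[of "\<theta> f"] assms by simp
    show ?thesis using assms by (simp add: i1 Y.vcomp_reassoc3[OF coh_ecell[OF assms]] rn)
  qed
  show ?thesis using assms
    by (simp add: Y.interchange[symmetric] Y.vcomp_reassoc[OF Y.interchange[symmetric]] K)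
qed

lemma transport_icell_coherent:
  assumes f: "f \<in> arr1 X"
  shows "vcomp Y (tr2 (icell X f)) (trunit (tgt1 X f)) =
    vcomp Y (trcmp f (inv1 X f)) (vcomp Y (hcomp2 Y (vid Y (tr1 f)) (trinv f)) (icell Y (tr1 f)))"
proof -
  have K: "vcomp Y (fmap2 M (icell X f)) (funit M (tgt1 X f))
      = vcomp Y (fcmp M f (inv1 X f)) (vcomp Y (hcomp2 Y (\<theta> f) (vcomp Y (finv M f) (inv2 Y (\<theta> f)))) (icell Y (tr1 f)))"
  proof -
    have rn: "icell Y (fmap1 M f) = vcomp Y (hcomp2 Y (\<theta> f) (inv2 Y (\<theta> f))) (icell Y (tr1 f))"
      using Y.icell_nat[of "\<theta> f"] assms by simp
    have i2: "vcomp Y (hcomp2 Y (vid Y (fmap1 M f)) (finv M f)) (hcomp2 Y (\<theta> f) (inv2 Y (\<theta> f))) =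
        hcomp2 Y (\<theta> f) (vcomp Y (finv M f) (inv2 Y (\<theta> f)))"
      using Y.interchange[of "inv2 Y (\<theta> f)" "finv M f" "\<theta> f" "vid Y (fmap1 M f)"] assms by simp
    show ?thesis using assms by (simp add: coh_icell rn Y.vcomp_reassoc[OF i2] del: Y.icell_nat)
  qed
  show ?thesis using assms
    by (simp add: Y.interchange[symmetric] Y.vcomp_reassoc[OF Y.interchange[symmetric]] K)
qed

lemma bimorphism_transport: "bimorphism X Y (transport X Y M \<theta>)"
  unfolding bimorphism_def transport_def bimorph.simps
  apply (intro conjI ballI impI)
  using X.is_bigroupoid Y.is_bigroupoid transport_fcmp_nat transport_finv_nat transport_assoc_coherent
      transport_runit_coherent transport_lunit_coherent transport_ecell_coherent transport_icell_coherent
  by (simp_all add: cell_def)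

end

context bgpd_morphism
begin

lemma hom_equivalence_if_weak_equivalence:
  "weak_equivalence X Y F \<Longrightarrow> x \<in> obj X \<Longrightarrow> x' \<in> obj X \<Longrightarrow>
    cequivalence (hom_cat X x x') (hom_cat Y (fmap0 F x) (fmap0 F x')) (fmap1 F) (fmap2 F)"
  by (simp add: weak_equivalence_def)

lemma inj_on_fmap1_if_cofibration:
  assumes "cofibration X Y F"
  shows "inj_on (fmap1 F) (arr1 X)"
proof (rule inj_onI)
  fix a a' assume a: "a \<in> arr1 X" "a' \<in> arr1 X" "fmap1 F a = fmap1 F a'"
  have inj_on_fmap0: "inj_on (fmap0 F) (obj X)"
    and inj1: "\<And>x x'. x \<in> obj X \<Longrightarrow> x' \<in> obj X \<Longrightarrow> inj_on (fmap1 F) (cob (hom_cat X x x'))"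
    using assms unfolding cofibration_def by auto
  have "fmap0 F (src1 X a) = fmap0 F (src1 X a')" "fmap0 F (tgt1 X a) = fmap0 F (tgt1 X a')"
    using a by (metis fmap1_src, metis fmap1_tgt)
  then have "src1 X a = src1 X a'" "tgt1 X a = tgt1 X a'"
    using inj_on_fmap0 a by (simp_all add: inj_on_def)
  then show "a = a'"
    using inj1[of "src1 X a" "tgt1 X a"] a by (simp add: hom_cat_def inj_on_def)
qed

lemma faithful_if_weak_equivalence:
  assumes "weak_equivalence X Y F"
    and a: "\<alpha> \<in> arr2 X" "\<alpha>' \<in> arr2 X" "dom2 X \<alpha> = dom2 X \<alpha>'" "cod2 X \<alpha> = cod2 X \<alpha>'"
      "fmap2 F \<alpha> = fmap2 F \<alpha>'"
  shows "\<alpha> = \<alpha>'"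
proof -
  let ?x = "src1 X (dom2 X \<alpha>)" and ?x' = "tgt1 X (dom2 X \<alpha>)"
  let ?hom = "hom_cat X ?x ?x'"
  have "?x \<in> obj X" "?x' \<in> obj X" using a by simp_all
  then obtain Go Ga \<eta> where \<eta>: "cnat_iso ?hom ?hom id id (Go \<circ> fmap1 F) (Ga \<circ> fmap2 F) \<eta>"
    using hom_equivalence_if_weak_equivalence[OF assms(1)] unfolding cequivalence_def by blast
  have hom: "\<alpha> \<in> car ?hom" "\<alpha>' \<in> car ?hom" "cod2 X \<alpha> \<in> cob ?hom"
    using a by (simp_all add: hom_cat_def)
  \<comment> \<open>naturality of the invertible unit \<open>\<eta>\<close> recovers \<open>\<alpha>\<close> from \<open>Ga (F \<alpha>)\<close>\<close>
  have "vcomp X (\<eta> (cod2 X \<alpha>)) \<alpha> = vcomp X (Ga (fmap2 F \<alpha>)) (\<eta> (dom2 X \<alpha>))"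
    and "vcomp X (\<eta> (cod2 X \<alpha>')) \<alpha>' = vcomp X (Ga (fmap2 F \<alpha>')) (\<eta> (dom2 X \<alpha>'))"
    using \<eta> hom unfolding cnat_iso_def by (simp_all add: hom_cat_def)
  then have eq: "vcomp X (\<eta> (cod2 X \<alpha>)) \<alpha> = vcomp X (\<eta> (cod2 X \<alpha>)) \<alpha>'"
    using a by simp
  have \<eta>_cod: "\<eta> (cod2 X \<alpha>) \<in> arr2 X" "dom2 X (\<eta> (cod2 X \<alpha>)) = cod2 X \<alpha>"
    using \<eta> hom unfolding cnat_iso_def by (simp_all add: hom_cat_def)
  show ?thesis
    by (rule X.vcomp_cancel_left[OF eq]) (use a \<eta>_cod in simp_all)
qed

lemma full_if_weak_equivalence:
  assumes "weak_equivalence X Y F"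
    and a: "a \<in> arr1 X" "a' \<in> arr1 X" "src1 X a = src1 X a'" "tgt1 X a = tgt1 X a'"
    and \<delta>: "\<delta> \<in> arr2 Y" "dom2 Y \<delta> = fmap1 F a" "cod2 Y \<delta> = fmap1 F a'"
  shows "\<exists>\<alpha>\<in>arr2 X. fmap2 F \<alpha> = \<delta>"
proof -
  let ?CX = "hom_cat X (src1 X a) (tgt1 X a)"
  let ?CY = "hom_cat Y (fmap0 F (src1 X a)) (fmap0 F (tgt1 X a))"
  obtain Go Ga \<eta> \<epsilon> where Ga: "cfunctor ?CY ?CX Go Ga"
    and \<eta>: "cnat_iso ?CX ?CX id id (Go \<circ> fmap1 F) (Ga \<circ> fmap2 F) \<eta>"
    and \<epsilon>: "cnat_iso ?CY ?CY (fmap1 F \<circ> Go) (fmap2 F \<circ> Ga) id id \<epsilon>"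
    using hom_equivalence_if_weak_equivalence[OF assms(1), of "src1 X a" "tgt1 X a"] a(1)
    unfolding cequivalence_def by auto
  have \<eta>_cell: "\<eta> b \<in> arr2 X \<and> dom2 X (\<eta> b) = b \<and> cod2 X (\<eta> b) = Go (fmap1 F b)" if "b \<in> cob ?CX" for b
    using \<eta> that unfolding cnat_iso_def by (simp add: hom_cat_def)
  have Ga_cell: "Ga \<gamma> \<in> arr2 X \<and> dom2 X (Ga \<gamma>) = Go (fmap1 F a) \<and> cod2 X (Ga \<gamma>) = Go (fmap1 F a')"
    if "\<gamma> \<in> arr2 Y" "dom2 Y \<gamma> = fmap1 F a" "cod2 Y \<gamma> = fmap1 F a'" for \<gamma>
    using Ga that a unfolding cfunctor_def by (simp add: hom_cat_def)
  have ab: "a \<in> cob ?CX" "a' \<in> cob ?CX" using a by (simp_all add: hom_cat_def)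
  \<comment> \<open>the candidate preimage conjugates \<open>Ga \<delta>\<close> by the unit\<close>
  define \<alpha> where "\<alpha> = vcomp X (vinv X (\<eta> a')) (vcomp X (Ga \<delta>) (\<eta> a))"
  have \<alpha>: "\<alpha> \<in> arr2 X" "dom2 X \<alpha> = a" "cod2 X \<alpha> = a'"
    using \<eta>_cell[OF ab(1)] \<eta>_cell[OF ab(2)] Ga_cell[OF \<delta>] unfolding \<alpha>_def by simp_all
  have \<alpha>_hom: "\<alpha> \<in> car ?CX" "fmap2 F \<alpha> \<in> car ?CY" and \<delta>_hom: "\<delta> \<in> car ?CY"
    using \<alpha> a \<delta> by (simp_all add: hom_cat_def)
  have "vcomp X (\<eta> a') \<alpha> = vcomp X (Ga (fmap2 F \<alpha>)) (\<eta> a)"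
    using bspec[OF conjunct2[OF \<eta>[unfolded cnat_iso_def]] \<alpha>_hom(1)] \<alpha> by (simp add: hom_cat_def)
  moreover have "vcomp X (\<eta> a') \<alpha> = vcomp X (Ga \<delta>) (\<eta> a)"
    unfolding \<alpha>_def using \<eta>_cell[OF ab(1)] \<eta>_cell[OF ab(2)] Ga_cell[OF \<delta>] by simp
  ultimately have "Ga (fmap2 F \<alpha>) = Ga \<delta>"
    using \<eta>_cell[OF ab(1)] Ga_cell[OF \<delta>] Ga_cell[of "fmap2 F \<alpha>"] \<alpha>
    by (intro X.vcomp_cancel_right[of "Ga (fmap2 F \<alpha>)" "\<eta> a" "Ga \<delta>"]) simp_all
  \<comment> \<open>now the counit \<open>\<epsilon>\<close> cancels \<open>Ga\<close>\<close>
  moreover have "vcomp Y (\<epsilon> (fmap1 F a')) (fmap2 F (Ga (fmap2 F \<alpha>))) = vcomp Y (fmap2 F \<alpha>) (\<epsilon> (fmap1 F a))"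
    using bspec[OF conjunct2[OF \<epsilon>[unfolded cnat_iso_def]] \<alpha>_hom(2)] \<alpha> by (simp add: hom_cat_def)
  moreover have "vcomp Y (\<epsilon> (fmap1 F a')) (fmap2 F (Ga \<delta>)) = vcomp Y \<delta> (\<epsilon> (fmap1 F a))"
    using bspec[OF conjunct2[OF \<epsilon>[unfolded cnat_iso_def]] \<delta>_hom] \<delta> by (simp add: hom_cat_def)
  ultimately have "vcomp Y (fmap2 F \<alpha>) (\<epsilon> (fmap1 F a)) = vcomp Y \<delta> (\<epsilon> (fmap1 F a))"
    by simp
  moreover have "\<epsilon> (fmap1 F a) \<in> arr2 Y" "cod2 Y (\<epsilon> (fmap1 F a)) = fmap1 F a"
    using \<epsilon> a unfolding cnat_iso_def by (simp_all add: hom_cat_def)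
  ultimately have "fmap2 F \<alpha> = \<delta>"
    using \<alpha> \<delta> by (intro Y.vcomp_cancel_right[of "fmap2 F \<alpha>" "\<epsilon> (fmap1 F a)" \<delta>]) simp_all
  with \<alpha> show ?thesis by blast
qed

lemma essentially_surjective_if_weak_equivalence:
  assumes "weak_equivalence X Y F" "x \<in> obj X" "x' \<in> obj X"
    and d: "d \<in> arr1 Y" "src1 Y d = fmap0 F x" "tgt1 Y d = fmap0 F x'"
  shows "\<exists>a\<in>arr1 X. \<exists>\<epsilon>\<in>arr2 Y. dom2 Y \<epsilon> = d \<and> cod2 Y \<epsilon> = fmap1 F a"
proof -
  let ?CX = "hom_cat X x x'" and ?CY = "hom_cat Y (fmap0 F x) (fmap0 F x')"
  obtain Go Ga \<eta> \<epsilon> where Go: "cfunctor ?CY ?CX Go Ga"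
    and \<epsilon>: "cnat_iso ?CY ?CY (fmap1 F \<circ> Go) (fmap2 F \<circ> Ga) id id \<epsilon>"
    using hom_equivalence_if_weak_equivalence[OF assms(1-3)] unfolding cequivalence_def by blast
  have d': "d \<in> cob ?CY" using d by (simp add: hom_cat_def)
  then have "Go d \<in> arr1 X"
    using Go unfolding cfunctor_def by (auto simp: hom_cat_def)
  moreover have "\<epsilon> d \<in> arr2 Y" "dom2 Y (\<epsilon> d) = fmap1 F (Go d)" "cod2 Y (\<epsilon> d) = d"
    using \<epsilon> d' unfolding cnat_iso_def by (simp_all add: hom_cat_def)
  ultimately show ?thesis
    by (intro bexI[of _ "Go d"] bexI[of _ "vinv Y (\<epsilon> d)"]) simp_all
qed

end

lemma fibration_lifts_2cells:
  "fibration X Y F \<Longrightarrow> a' \<in> arr1 X \<Longrightarrow> \<beta> \<in> arr2 Y \<Longrightarrow> cod2 Y \<beta> = fmap1 F a' \<Longrightarrow>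
    \<exists>\<alpha>\<in>arr2 X. cod2 X \<alpha> = a' \<and> fmap1 F (dom2 X \<alpha>) = dom2 Y \<beta> \<and> fmap2 F \<alpha> = \<beta>"
  unfolding fibration_def by blast

locale surj_trivial_cofibration = bgpd_morphism A D K
  for A :: "('o,'a,'c,'z) bigroupoid_scheme" and D :: "('p,'b,'d,'y) bigroupoid_scheme"
    and K :: "('o,'a,'c,'p,'b,'d) bimorph" +
  assumes trivial_cofibration: "trivial_cofibration A D K"
    and surj0: "fmap0 K ` obj A = obj D"
begin

lemma inj_on_fmap0: "inj_on (fmap0 K) (obj A)"
  using trivial_cofibration unfolding trivial_cofibration_def cofibration_def by blast

lemma inj_on_fmap1: "inj_on (fmap1 K) (arr1 A)"
  using trivial_cofibration inj_on_fmap1_if_cofibration unfolding trivial_cofibration_def by blast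

lemma fmap2_faithful:
  "\<alpha> \<in> arr2 A \<Longrightarrow> \<alpha>' \<in> arr2 A \<Longrightarrow> dom2 A \<alpha> = dom2 A \<alpha>' \<Longrightarrow> cod2 A \<alpha> = cod2 A \<alpha>' \<Longrightarrow>
    fmap2 K \<alpha> = fmap2 K \<alpha>' \<Longrightarrow> \<alpha> = \<alpha>'"
  using trivial_cofibration faithful_if_weak_equivalence unfolding trivial_cofibration_def by blast

lemma fmap2_full:
  assumes "a \<in> arr1 A" "a' \<in> arr1 A" "\<delta> \<in> arr2 D" "dom2 D \<delta> = fmap1 K a" "cod2 D \<delta> = fmap1 K a'"
  shows "\<exists>\<alpha>\<in>arr2 A. fmap2 K \<alpha> = \<delta>"
proof (rule full_if_weak_equivalence)
  show "weak_equivalence A D K"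
    using trivial_cofibration unfolding trivial_cofibration_def by blast
  have "fmap0 K (src1 A a) = fmap0 K (src1 A a')" "fmap0 K (tgt1 A a) = fmap0 K (tgt1 A a')"
    using assms by (metis fmap1_src Y.src_cod, metis fmap1_tgt Y.tgt_cod)
  then show "src1 A a = src1 A a'" "tgt1 A a = tgt1 A a'"
    using inj_on_fmap0 assms by (simp_all add: inj_on_def)
qed (use assms in auto)

lemma fmap1_essentially_surjective:
  assumes "d \<in> arr1 D"
  shows "\<exists>a\<in>arr1 A. \<exists>\<epsilon>\<in>arr2 D. dom2 D \<epsilon> = d \<and> cod2 D \<epsilon> = fmap1 K a"
proof -
  obtain x x' where "x \<in> obj A" "src1 D d = fmap0 K x" "x' \<in> obj A" "tgt1 D d = fmap0 K x'"
    using surj0 assms by (metis Y.src_obj Y.tgt_obj imageE)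
  then show ?thesis
    using trivial_cofibration assms essentially_surjective_if_weak_equivalence
    unfolding trivial_cofibration_def by blast
qed

text \<open>With these rules, \<open>K\<close> of any structure 2-cell of \<open>A\<close> is expressed through the structure of \<open>D\<close>;
  since \<open>K\<close> is faithful (\<open>fmap2_inj\<close>), every coherence law of the retraction reduces to
  an identity between 2-cells of \<open>D\<close>.\<close>

lemmas [simp] = fmap2_hcomp2_eq fmap2_inv2_eq fmap2_assoc_eq fmap2_runit_eq fmap2_lunit_eq
  fmap2_ecell_eq fmap2_icell_eq

definition retr0 where "retr0 y = inv_into (obj A) (fmap0 K) y"
definition retr1 where "retr1 d = (if d \<in> fmap1 K ` arr1 A then the_inv_into (arr1 A) (fmap1 K) d
     else (SOME a. a \<in> arr1 A \<and> (\<exists>\<epsilon>\<in>arr2 D. dom2 D \<epsilon> = d \<and> cod2 D \<epsilon> = fmap1 K a)))"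
definition retr_cell where "retr_cell d = (if d \<in> fmap1 K ` arr1 A then vid D d
     else (SOME \<epsilon>. \<epsilon> \<in> arr2 D \<and> dom2 D \<epsilon> = d \<and> cod2 D \<epsilon> = fmap1 K (retr1 d)))"
definition preim2 where "preim2 \<delta> = (SOME \<alpha>. \<alpha> \<in> arr2 A \<and> fmap2 K \<alpha> = \<delta>)"

lemma fmap0_retr0[simp]: "y \<in> obj D \<Longrightarrow> fmap0 K (retr0 y) = y"
  unfolding retr0_def using surj0 by (simp add: f_inv_into_f)
lemma retr0_obj[simp]: "y \<in> obj D \<Longrightarrow> retr0 y \<in> obj A"
  unfolding retr0_def using surj0 by (metis inv_into_into)
lemma retr0_fmap0[simp]: "x \<in> obj A \<Longrightarrow> retr0 (fmap0 K x) = x"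
  unfolding retr0_def using inj_on_fmap0 by simp

lemma retr1_fmap1[simp]: "a \<in> arr1 A \<Longrightarrow> retr1 (fmap1 K a) = a"
  unfolding retr1_def using inj_on_fmap1 by (simp add: the_inv_into_f_f)
lemma retr_cell_fmap1[simp]: "a \<in> arr1 A \<Longrightarrow> retr_cell (fmap1 K a) = vid D (fmap1 K a)"
  unfolding retr_cell_def by simp

lemma retr1_retr_cell: assumes d: "d \<in> arr1 D"
  shows "retr1 d \<in> arr1 A \<and> retr_cell d \<in> arr2 D \<and> dom2 D (retr_cell d) = d \<and> cod2 D (retr_cell d) = fmap1 K (retr1 d)"
proof (cases "d \<in> fmap1 K ` arr1 A")
  case True
  then obtain a where a: "a \<in> arr1 A" "d = fmap1 K a" by blast
  thus ?thesis by simp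
next
  case False
  have ex: "\<exists>a. a \<in> arr1 A \<and> (\<exists>\<epsilon>\<in>arr2 D. dom2 D \<epsilon> = d \<and> cod2 D \<epsilon> = fmap1 K a)" using fmap1_essentially_surjective[OF d] by blast
  have r: "retr1 d \<in> arr1 A \<and> (\<exists>\<epsilon>\<in>arr2 D. dom2 D \<epsilon> = d \<and> cod2 D \<epsilon> = fmap1 K (retr1 d))"
    unfolding retr1_def using False someI_ex[OF ex] by simp
  hence "\<exists>\<epsilon>. \<epsilon> \<in> arr2 D \<and> dom2 D \<epsilon> = d \<and> cod2 D \<epsilon> = fmap1 K (retr1 d)" by blast
  from someI_ex[OF this] have "retr_cell d \<in> arr2 D \<and> dom2 D (retr_cell d) = d \<and> cod2 D (retr_cell d) = fmap1 K (retr1 d)"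
    unfolding retr_cell_def using False by simp
  thus ?thesis using r by blast
qed

lemma retr1_arr[simp]: "d \<in> arr1 D \<Longrightarrow> retr1 d \<in> arr1 A" using retr1_retr_cell by blast
lemma retr_cell_arr[simp]: "d \<in> arr1 D \<Longrightarrow> retr_cell d \<in> arr2 D" using retr1_retr_cell by blast
lemma retr_cell_dom[simp]: "d \<in> arr1 D \<Longrightarrow> dom2 D (retr_cell d) = d" using retr1_retr_cell by blast
lemma retr_cell_cod[simp]: "d \<in> arr1 D \<Longrightarrow> cod2 D (retr_cell d) = fmap1 K (retr1 d)"
  using retr1_retr_cell by blast

lemma retr1_src[simp]: assumes d: "d \<in> arr1 D" shows "src1 A (retr1 d) = retr0 (src1 D d)"
proof -
  have "fmap0 K (src1 A (retr1 d)) = src1 D (cod2 D (retr_cell d))" using d by simp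
  also have "\<dots> = src1 D d" using d by (simp del: retr_cell_cod)
  finally have "fmap0 K (src1 A (retr1 d)) = src1 D d" .
  hence "retr0 (fmap0 K (src1 A (retr1 d))) = retr0 (src1 D d)" by simp
  thus ?thesis using d by simp
qed
lemma retr1_tgt[simp]: assumes d: "d \<in> arr1 D" shows "tgt1 A (retr1 d) = retr0 (tgt1 D d)"
proof -
  have "fmap0 K (tgt1 A (retr1 d)) = tgt1 D (cod2 D (retr_cell d))" using d by simp
  also have "\<dots> = tgt1 D d" using d by (simp del: retr_cell_cod)
  finally have "fmap0 K (tgt1 A (retr1 d)) = tgt1 D d" .
  hence "retr0 (fmap0 K (tgt1 A (retr1 d))) = retr0 (tgt1 D d)" by simp
  thus ?thesis using d by simp
qed

lemma fmap2_inj: assumes "\<alpha> \<in> arr2 A" "\<alpha>' \<in> arr2 A" "fmap2 K \<alpha> = fmap2 K \<alpha>'" shows "\<alpha> = \<alpha>'"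
proof -
  have "fmap1 K (dom2 A \<alpha>) = fmap1 K (dom2 A \<alpha>')" using assms by (metis fmap2_dom)
  hence 1: "dom2 A \<alpha> = dom2 A \<alpha>'" using assms inj_on_fmap1 by (simp add: inj_on_def)
  have "fmap1 K (cod2 A \<alpha>) = fmap1 K (cod2 A \<alpha>')" using assms by (metis fmap2_cod)
  hence 2: "cod2 A \<alpha> = cod2 A \<alpha>'" using assms inj_on_fmap1 by (simp add: inj_on_def)
  show ?thesis using fmap2_faithful[OF assms(1,2) 1 2 assms(3)] .
qed

lemma preim2_props: assumes "\<delta> \<in> arr2 D" "dom2 D \<delta> \<in> fmap1 K ` arr1 A" "cod2 D \<delta> \<in> fmap1 K ` arr1 A"
  shows "preim2 \<delta> \<in> arr2 A \<and> fmap2 K (preim2 \<delta>) = \<delta>"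
proof -
  obtain a a' where "a \<in> arr1 A" "a' \<in> arr1 A" "dom2 D \<delta> = fmap1 K a" "cod2 D \<delta> = fmap1 K a'" using assms by blast
  from fmap2_full[OF this(1,2) assms(1) this(3,4)] have "\<exists>\<alpha>. \<alpha> \<in> arr2 A \<and> fmap2 K \<alpha> = \<delta>" by blast
  from someI_ex[OF this] show ?thesis unfolding preim2_def .
qed
lemma preim2_arr[simp]: "\<delta> \<in> arr2 D \<Longrightarrow> dom2 D \<delta> \<in> fmap1 K ` arr1 A \<Longrightarrow> cod2 D \<delta> \<in> fmap1 K ` arr1 A \<Longrightarrow> preim2 \<delta> \<in> arr2 A"
  using preim2_props by blast
lemma fmap2_preim2[simp]: "\<delta> \<in> arr2 D \<Longrightarrow> dom2 D \<delta> \<in> fmap1 K ` arr1 A \<Longrightarrow> cod2 D \<delta> \<in> fmap1 K ` arr1 A \<Longrightarrow> fmap2 K (preim2 \<delta>) = \<delta>"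
  using preim2_props by blast
lemma preim2_dom[simp]: assumes "\<delta> \<in> arr2 D" "dom2 D \<delta> \<in> fmap1 K ` arr1 A" "cod2 D \<delta> \<in> fmap1 K ` arr1 A"
  shows "dom2 A (preim2 \<delta>) = retr1 (dom2 D \<delta>)"
proof -
  have "fmap1 K (dom2 A (preim2 \<delta>)) = dom2 D \<delta>" using assms by (metis fmap2_dom preim2_props)
  thus ?thesis using assms by (metis retr1_fmap1 preim2_arr X.dom_arr)
qed
lemma preim2_cod[simp]: assumes "\<delta> \<in> arr2 D" "dom2 D \<delta> \<in> fmap1 K ` arr1 A" "cod2 D \<delta> \<in> fmap1 K ` arr1 A"
  shows "cod2 A (preim2 \<delta>) = retr1 (cod2 D \<delta>)"
proof -
  have "fmap1 K (cod2 A (preim2 \<delta>)) = cod2 D \<delta>" using assms by (metis fmap2_cod preim2_props)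
  thus ?thesis using assms by (metis retr1_fmap1 preim2_arr X.cod_arr)
qed
lemma preim2_fmap2[simp]: "\<alpha> \<in> arr2 A \<Longrightarrow> preim2 (fmap2 K \<alpha>) = \<alpha>"
  by (rule fmap2_inj) auto

definition retraction where "retraction = \<lparr> fmap0 = retr0, fmap1 = retr1,
   fmap2 = (\<lambda>\<delta>. preim2 (vcomp D (retr_cell (cod2 D \<delta>)) (vcomp D \<delta> (vinv D (retr_cell (dom2 D \<delta>)))))),
   fcmp = (\<lambda>g f. preim2 (vcomp D (retr_cell (hcomp1 D g f)) (vcomp D (hcomp2 D (vinv D (retr_cell g))
       (vinv D (retr_cell f))) (vinv D (fcmp K (retr1 g) (retr1 f)))))),
   funit = (\<lambda>y. preim2 (vcomp D (retr_cell (unit1 D y)) (vinv D (funit K (retr0 y))))),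
   finv = (\<lambda>f. preim2 (vcomp D (retr_cell (inv1 D f)) (vcomp D (inv2 D (vinv D (retr_cell f))) (vinv D (finv K (retr1 f)))))) \<rparr>"

lemma retraction_simps[simp]: "fmap0 retraction = retr0" "fmap1 retraction = retr1"
  "fmap2 retraction \<delta> = preim2 (vcomp D (retr_cell (cod2 D \<delta>)) (vcomp D \<delta> (vinv D (retr_cell (dom2 D \<delta>)))))"
  "fcmp retraction g f = preim2 (vcomp D (retr_cell (hcomp1 D g f))
      (vcomp D (hcomp2 D (vinv D (retr_cell g)) (vinv D (retr_cell f))) (vinv D (fcmp K (retr1 g) (retr1 f)))))"
  "funit retraction y = preim2 (vcomp D (retr_cell (unit1 D y)) (vinv D (funit K (retr0 y))))"
  "finv retraction f = preim2 (vcomp D (retr_cell (inv1 D f)) (vcomp D (inv2 D (vinv D (retr_cell f)))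
      (vinv D (finv K (retr1 f)))))"
  unfolding retraction_def by simp_all

lemma retraction_vid: "f \<in> arr1 D \<Longrightarrow> fmap2 retraction (vid D f) = vid A (retr1 f)"
  by (rule fmap2_inj) auto
lemma retraction_vcomp: "\<alpha> \<in> arr2 D \<Longrightarrow> \<beta> \<in> arr2 D \<Longrightarrow> cod2 D \<alpha> = dom2 D \<beta> \<Longrightarrow>
  fmap2 retraction (vcomp D \<beta> \<alpha>) = vcomp A (fmap2 retraction \<beta>) (fmap2 retraction \<alpha>)"
  by (rule fmap2_inj) auto

lemma retraction_fcmp_nat: "\<alpha> \<in> arr2 D \<Longrightarrow> \<beta> \<in> arr2 D \<Longrightarrow> src1 D (dom2 D \<beta>) = tgt1 D (dom2 D \<alpha>) \<Longrightarrow>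
        vcomp A (fcmp retraction (cod2 D \<beta>) (cod2 D \<alpha>)) (hcomp2 A (fmap2 retraction \<beta>) (fmap2 retraction \<alpha>)) =
        vcomp A (fmap2 retraction (hcomp2 D \<beta> \<alpha>)) (fcmp retraction (dom2 D \<beta>) (dom2 D \<alpha>))"
  apply (rule fmap2_inj)
  by (simp_all add: Y.interchange[symmetric] Y.vcomp_reassoc[OF Y.interchange[symmetric]])

lemma retraction_assoc_coherent: assumes "f \<in> arr1 D" "g \<in> arr1 D" "h \<in> arr1 D" "src1 D g = tgt1 D f" "src1 D h = tgt1 D g"
  shows "vcomp A (fmap2 retraction (assoc D h g f)) (vcomp A (fcmp retraction (hcomp1 D h g) f)
      (hcomp2 A (fcmp retraction h g) (vid A (fmap1 retraction f)))) =
    vcomp A (fcmp retraction h (hcomp1 D g f)) (vcomp A (hcomp2 A (vid A (fmap1 retraction h))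
        (fcmp retraction g f)) (assoc A (fmap1 retraction h) (fmap1 retraction g) (fmap1 retraction f)))"
proof -
  let ?eh = "vinv D (retr_cell h)" and ?eg = "vinv D (retr_cell g)" and ?ef = "vinv D (retr_cell f)"
      and ?vk = "vinv D (fcmp K (retr1 h) (retr1 g))"
  let ?Kf = "fmap1 K (retr1 f)" and ?Kg = "fmap1 K (retr1 g)" and ?Kh = "fmap1 K (retr1 h)"
  have i: "hcomp2 D (vcomp D (hcomp2 D ?eh ?eg) ?vk) ?ef = vcomp D (hcomp2 D (hcomp2 D ?eh ?eg) ?ef) (hcomp2 D ?vk (vid D ?Kf))"
    using Y.interchange[of "vid D ?Kf" ?ef ?vk "hcomp2 D ?eh ?eg"] assms by simp
  have n: "vcomp D (assoc D h g f) (hcomp2 D (hcomp2 D ?eh ?eg) ?ef) = vcomp D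
      (hcomp2 D ?eh (hcomp2 D ?eg ?ef)) (assoc D ?Kh ?Kg ?Kf)"
    using Y.assoc_nat[of ?ef ?eg ?eh] assms by simp
  have key: "vcomp D (assoc D h g f) (hcomp2 D (vcomp D (hcomp2 D ?eh ?eg) ?vk) ?ef) =
     vcomp D (hcomp2 D ?eh (hcomp2 D ?eg ?ef)) (vcomp D (assoc D ?Kh ?Kg ?Kf) (hcomp2 D ?vk (vid D ?Kf)))"
    using assms by (simp add: i Y.vcomp_reassoc[OF n])
  show ?thesis
  apply (rule fmap2_inj)
  using assms by (simp_all add: Y.interchange[symmetric] Y.vcomp_reassoc[OF Y.interchange[symmetric]] Y.vcomp_reassoc[OF key])
qed

lemma retraction_runit_coherent: assumes "f \<in> arr1 D"
  shows "vcomp A (fmap2 retraction (runit D f))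
          (vcomp A (fcmp retraction f (unit1 D (src1 D f))) (hcomp2 A (vid A (fmap1 retraction f))
              (funit retraction (src1 D f)))) =
        runit A (fmap1 retraction f)"
proof -
  let ?e = "vinv D (retr_cell f)" and ?u = "vinv D (funit K (retr0 (src1 D f)))" and ?k = "fmap1 K (retr1 f)"
  have i: "hcomp2 D ?e ?u = vcomp D (hcomp2 D ?e (vid D (unit1 D (src1 D f)))) (hcomp2 D (vid D ?k) ?u)"
    using Y.interchange[of ?u "vid D (unit1 D (src1 D f))" "vid D ?k" ?e] assms by simp
  have n: "vcomp D (runit D f) (hcomp2 D ?e (vid D (unit1 D (src1 D f)))) = vcomp D ?e (runit D ?k)"
    using Y.runit_nat[of ?e] assms by simp
  have key: "vcomp D (runit D f) (hcomp2 D ?e ?u) = vcomp D ?e (vcomp D (runit D ?k) (hcomp2 D (vid D ?k) ?u))"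
    using assms by (simp add: i Y.vcomp_reassoc[OF n])
  show ?thesis
  apply (rule fmap2_inj)
  using assms by (simp_all add: Y.interchange[symmetric] Y.vcomp_reassoc[OF Y.interchange[symmetric]] Y.vcomp_reassoc[OF key])
qed

lemma retraction_lunit_coherent: assumes "f \<in> arr1 D"
  shows "vcomp A (fmap2 retraction (lunit D f))
          (vcomp A (fcmp retraction (unit1 D (tgt1 D f)) f) (hcomp2 A (funit retraction (tgt1 D f))
              (vid A (fmap1 retraction f)))) =
        lunit A (fmap1 retraction f)"
proof -
  let ?e = "vinv D (retr_cell f)" and ?u = "vinv D (funit K (retr0 (tgt1 D f)))" and ?k = "fmap1 K (retr1 f)"
  have i: "hcomp2 D ?u ?e = vcomp D (hcomp2 D (vid D (unit1 D (tgt1 D f))) ?e) (hcomp2 D ?u (vid D ?k))"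
    using Y.interchange[of "vid D ?k" ?e ?u "vid D (unit1 D (tgt1 D f))"] assms by simp
  have n: "vcomp D (lunit D f) (hcomp2 D (vid D (unit1 D (tgt1 D f))) ?e) = vcomp D ?e (lunit D ?k)"
    using Y.lunit_nat[of ?e] assms by simp
  have key: "vcomp D (lunit D f) (hcomp2 D ?u ?e) = vcomp D ?e (vcomp D (lunit D ?k) (hcomp2 D ?u (vid D ?k)))"
    using assms by (simp add: i Y.vcomp_reassoc[OF n])
  show ?thesis
  apply (rule fmap2_inj)
  using assms by (simp_all add: Y.interchange[symmetric] Y.vcomp_reassoc[OF Y.interchange[symmetric]] Y.vcomp_reassoc[OF key])
qed

lemma retraction_ecell_coherent: assumes "f \<in> arr1 D"
  shows "vcomp A (fmap2 retraction (ecell D f))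
          (vcomp A (fcmp retraction (inv1 D f) f) (hcomp2 A (finv retraction f) (vid A (fmap1 retraction f)))) =
        vcomp A (funit retraction (src1 D f)) (ecell A (fmap1 retraction f))"
proof -
  let ?e = "vinv D (retr_cell f)" and ?u = "vinv D (finv K (retr1 f))" and ?k = "fmap1 K (retr1 f)"
  have i: "hcomp2 D (vcomp D (inv2 D ?e) ?u) ?e = vcomp D (hcomp2 D (inv2 D ?e) ?e) (hcomp2 D ?u (vid D ?k))"
    using Y.interchange[of "vid D ?k" ?e ?u "inv2 D ?e"] assms by simp
  have n: "vcomp D (ecell D f) (hcomp2 D (inv2 D ?e) ?e) = ecell D ?k"
    using Y.ecell_nat[of ?e] assms by simp
  have key: "vcomp D (ecell D f) (hcomp2 D (vcomp D (inv2 D ?e) ?u) ?e) = vcomp D (ecell D ?k) (hcomp2 D ?u (vid D ?k))"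
    using assms by (simp add: i Y.vcomp_reassoc[OF n])
  show ?thesis
  apply (rule fmap2_inj)
  using assms by (simp_all add: Y.interchange[symmetric] Y.vcomp_reassoc[OF Y.interchange[symmetric]] Y.vcomp_reassoc[OF key])
qed

lemma retraction_icell_coherent: assumes "f \<in> arr1 D"
  shows "vcomp A (fmap2 retraction (icell D f)) (funit retraction (tgt1 D f)) =
        vcomp A (fcmp retraction f (inv1 D f))
          (vcomp A (hcomp2 A (vid A (fmap1 retraction f)) (finv retraction f)) (icell A (fmap1 retraction f)))"
proof -
  let ?e = "vinv D (retr_cell f)" and ?k = "fmap1 K (retr1 f)"
  have n: "icell D f = vcomp D (hcomp2 D ?e (inv2 D ?e)) (icell D ?k)"
    using Y.icell_nat[of ?e] assms by simp
  show ?thesis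
  apply (rule fmap2_inj)
  using assms by (simp_all add: Y.interchange[symmetric] Y.vcomp_reassoc[OF Y.interchange[symmetric]] n)
qed

lemma retraction_finv_nat: "\<alpha> \<in> arr2 D \<Longrightarrow> vcomp A (finv retraction (cod2 D \<alpha>)) (inv2 A (fmap2 retraction \<alpha>)) =
        vcomp A (fmap2 retraction (inv2 D \<alpha>)) (finv retraction (dom2 D \<alpha>))"
  apply (rule fmap2_inj)
  by (simp_all add: Y.vinv_inv2[symmetric])

lemma retraction_typed:
  "\<delta> \<in> arr2 D \<Longrightarrow> fmap2 retraction \<delta> \<in> arr2 A \<and> dom2 A (fmap2 retraction \<delta>) = retr1 (dom2 D \<delta>)
      \<and> cod2 A (fmap2 retraction \<delta>) = retr1 (cod2 D \<delta>)"
  "f \<in> arr1 D \<Longrightarrow> g \<in> arr1 D \<Longrightarrow> src1 D g = tgt1 D f \<Longrightarrow> fcmp retraction g f \<in> arr2 A \<and>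
     dom2 A (fcmp retraction g f) = hcomp1 A (retr1 g) (retr1 f) \<and> cod2 A (fcmp retraction g f) = retr1 (hcomp1 D g f)"
  "y \<in> obj D \<Longrightarrow> funit retraction y \<in> arr2 A \<and> dom2 A (funit retraction y) = unit1 A (retr0 y)
      \<and> cod2 A (funit retraction y) = retr1 (unit1 D y)"
  "f \<in> arr1 D \<Longrightarrow> finv retraction f \<in> arr2 A \<and> dom2 A (finv retraction f) = inv1 A (retr1 f)
      \<and> cod2 A (finv retraction f) = retr1 (inv1 D f)"
  by simp_all

lemma retraction_comp_fcmp: "f \<in> arr1 A \<Longrightarrow> g \<in> arr1 A \<Longrightarrow> src1 A g = tgt1 A f \<Longrightarrow>
   vcomp A (fmap2 retraction (fcmp K g f)) (fcmp retraction (fmap1 K g) (fmap1 K f)) = vid A (hcomp1 A g f)"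
  by (rule fmap2_inj) simp_all
lemma retraction_comp_funit: "x \<in> obj A \<Longrightarrow>
   vcomp A (fmap2 retraction (funit K x)) (funit retraction (fmap0 K x)) = vid A (unit1 A x)"
  by (rule fmap2_inj) simp_all
lemma retraction_comp_finv: "a \<in> arr1 A \<Longrightarrow>
   vcomp A (fmap2 retraction (finv K a)) (finv retraction (fmap1 K a)) = vid A (inv1 A a)"
  by (rule fmap2_inj) simp_all

lemma bimorphism_retraction: "bimorphism D A retraction"
  unfolding bimorphism_def
  apply (intro conjI ballI impI)
  using X.is_bigroupoid Y.is_bigroupoid retraction_typed retraction_vid retraction_vcomp
      retraction_fcmp_nat retraction_finv_nat retraction_assoc_coherent retraction_runit_coherent
          retraction_lunit_coherent retraction_ecell_coherent retraction_icell_coherent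
  by (simp_all add: cell_def del: retraction_simps(3-6))

end

locale lifting_problem =
  F: bgpd_morphism A B F + G: bgpd_morphism B C G + H: bgpd_morphism D C H +
  K: surj_trivial_cofibration A D K
  for A B C D F G H K +
  assumes square_commutes: "bm_eq A (bm_comp C G F) (bm_comp C H K)"
    and fibration: "fibration B C G"
begin

lemma square_commutes_fmap[simp]:
  "x \<in> obj A \<Longrightarrow> fmap0 G (fmap0 F x) = fmap0 H (fmap0 K x)"
  "a \<in> arr1 A \<Longrightarrow> fmap1 G (fmap1 F a) = fmap1 H (fmap1 K a)"
  "\<alpha> \<in> arr2 A \<Longrightarrow> fmap2 G (fmap2 F \<alpha>) = fmap2 H (fmap2 K \<alpha>)"
  using square_commutes unfolding bm_eq_def bm_comp_def by simp_all

lemma square_commutes_fcmp: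
  "f \<in> arr1 A \<Longrightarrow> g \<in> arr1 A \<Longrightarrow> src1 A g = tgt1 A f \<Longrightarrow>
    vcomp C (fmap2 G (fcmp F g f)) (fcmp G (fmap1 F g) (fmap1 F f)) =
    vcomp C (fmap2 H (fcmp K g f)) (fcmp H (fmap1 K g) (fmap1 K f))"
  using square_commutes unfolding bm_eq_def bm_comp_def by simp

lemma square_commutes_funit:
  "x \<in> obj A \<Longrightarrow>
    vcomp C (fmap2 G (funit F x)) (funit G (fmap0 F x)) = vcomp C (fmap2 H (funit K x)) (funit H (fmap0 K x))"
  using square_commutes unfolding bm_eq_def bm_comp_def by simp

lemma square_commutes_finv:
  "a \<in> arr1 A \<Longrightarrow>
    vcomp C (fmap2 G (finv F a)) (finv G (fmap1 F a)) = vcomp C (fmap2 H (finv K a)) (finv H (fmap1 K a))"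
  using square_commutes unfolding bm_eq_def bm_comp_def by simp

sublocale J: bgpd_morphism D A K.retraction
  by (rule bgpd_morphismI) (rule K.bimorphism_retraction)

sublocale FJ: bgpd_morphism_comp D A B K.retraction F ..

definition lift_cell where
  "lift_cell d = (if d \<in> fmap1 K ` arr1 A then vid B (fmap1 F (K.retr1 d)) else
     (SOME \<beta>. \<beta> \<in> arr2 B \<and> cod2 B \<beta> = fmap1 F (K.retr1 d) \<and> fmap1 G (dom2 B \<beta>) = fmap1 H d \<and>
        fmap2 G \<beta> = fmap2 H (K.retr_cell d)))"

lemma lift_cell:
  assumes d: "d \<in> arr1 D"
  shows "lift_cell d \<in> arr2 B \<and> cod2 B (lift_cell d) = fmap1 F (K.retr1 d) \<and>
    fmap1 G (dom2 B (lift_cell d)) = fmap1 H d \<and> fmap2 G (lift_cell d) = fmap2 H (K.retr_cell d)"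
proof (cases "d \<in> fmap1 K ` arr1 A")
  case True
  then show ?thesis unfolding lift_cell_def by auto
next
  case False
  have "\<exists>\<beta>\<in>arr2 B. cod2 B \<beta> = fmap1 F (K.retr1 d) \<and> fmap1 G (dom2 B \<beta>) = dom2 C (fmap2 H (K.retr_cell d)) \<and>
      fmap2 G \<beta> = fmap2 H (K.retr_cell d)"
    by (rule fibration_lifts_2cells[OF fibration]) (use d in simp_all)
  then have "\<exists>\<beta>. \<beta> \<in> arr2 B \<and> cod2 B \<beta> = fmap1 F (K.retr1 d) \<and> fmap1 G (dom2 B \<beta>) = fmap1 H d \<and>
      fmap2 G \<beta> = fmap2 H (K.retr_cell d)"
    using d by auto
  from someI_ex[OF this] show ?thesis
    unfolding lift_cell_def using False by simp
qed

lemma lift_cell_fmap1[simp]: "a \<in> arr1 A \<Longrightarrow> lift_cell (fmap1 K a) = vid B (fmap1 F a)"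
  unfolding lift_cell_def by simp

lemma fmap2_G_lift_cell[simp]: "d \<in> arr1 D \<Longrightarrow> fmap2 G (lift_cell d) = fmap2 H (K.retr_cell d)"
  and fmap1_G_dom_lift_cell[simp]: "d \<in> arr1 D \<Longrightarrow> fmap1 G (dom2 B (lift_cell d)) = fmap1 H d"
  using lift_cell by blast+

sublocale T: bgpd_transport D B "bm_comp B F K.retraction" lift_cell
proof (rule bgpd_transport.intro)
  show "bgpd_morphism D B (bm_comp B F K.retraction)"
    by (rule bgpd_morphismI) (rule FJ.bimorphism_comp)
  show "bgpd_transport_axioms D B (bm_comp B F K.retraction) lift_cell"
    by unfold_locales (simp_all add: lift_cell bm_comp_def)
qed

definition lift where "lift = transport D B (bm_comp B F K.retraction) lift_cell"

lemma bimorphism_lift: "bimorphism D B lift"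
  unfolding lift_def by (rule T.bimorphism_transport)

lemma F_retraction_simps[simp]:
  "fmap0 (bm_comp B F K.retraction) = fmap0 F \<circ> K.retr0"
  "fmap1 (bm_comp B F K.retraction) = fmap1 F \<circ> K.retr1"
  "fmap2 (bm_comp B F K.retraction) = fmap2 F \<circ> fmap2 K.retraction"
  "fcmp (bm_comp B F K.retraction) g f =
     vcomp B (fmap2 F (fcmp K.retraction g f)) (fcmp F (K.retr1 g) (K.retr1 f))"
  "funit (bm_comp B F K.retraction) y = vcomp B (fmap2 F (funit K.retraction y)) (funit F (K.retr0 y))"
  "finv (bm_comp B F K.retraction) f = vcomp B (fmap2 F (finv K.retraction f)) (finv F (K.retr1 f))"
  unfolding bm_comp_def by (simp_all del: K.retraction_simps(3-6))

lemma lift_simps[simp]: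
  "fmap0 lift = fmap0 (bm_comp B F K.retraction)"
  "fmap1 lift d = dom2 B (lift_cell d)"
  "fmap2 lift \<delta> = vcomp B (vinv B (lift_cell (cod2 D \<delta>)))
     (vcomp B (fmap2 (bm_comp B F K.retraction) \<delta>) (lift_cell (dom2 D \<delta>)))"
  "fcmp lift g f = vcomp B (vinv B (lift_cell (hcomp1 D g f)))
     (vcomp B (fcmp (bm_comp B F K.retraction) g f) (hcomp2 B (lift_cell g) (lift_cell f)))"
  "funit lift y = vcomp B (vinv B (lift_cell (unit1 D y))) (funit (bm_comp B F K.retraction) y)"
  "finv lift f = vcomp B (vinv B (lift_cell (inv1 D f)))
     (vcomp B (finv (bm_comp B F K.retraction) f) (inv2 B (lift_cell f)))"
  unfolding lift_def transport_def by simp_all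

lemma lift_comp_K: "bm_eq A (bm_comp B lift K) F"
  unfolding bm_eq_def
proof (intro conjI ballI impI)
  fix x assume x: "x \<in> obj A"
  show "fmap0 (bm_comp B lift K) x = fmap0 F x"
    using x by (simp add: bm_comp_def)
  have h: "vcomp B (fmap2 F (fmap2 K.retraction (funit K x))) (fmap2 F (funit K.retraction (fmap0 K x))) =
      vid B (fmap1 F (unit1 A x))"
    by (rule F.fmap2_vcomp_eq_vid[OF K.retraction_comp_funit[OF x]])
      (use x in \<open>simp_all del: K.retraction_simps(3-6)\<close>)
  show "funit (bm_comp B lift K) x = funit F x"
    using x by (simp add: bm_comp_def F.Y.vcomp_reassoc[OF h] del: K.retraction_simps(3-6))
next
  fix a assume a: "a \<in> arr1 A"
  show "fmap1 (bm_comp B lift K) a = fmap1 F a"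
    using a by (simp add: bm_comp_def)
  have h: "vcomp B (fmap2 F (fmap2 K.retraction (finv K a))) (fmap2 F (finv K.retraction (fmap1 K a))) =
      vid B (fmap1 F (inv1 A a))"
    by (rule F.fmap2_vcomp_eq_vid[OF K.retraction_comp_finv[OF a]])
      (use a in \<open>simp_all del: K.retraction_simps(3-6)\<close>)
  show "finv (bm_comp B lift K) a = finv F a"
    using a by (simp add: bm_comp_def F.Y.vcomp_reassoc[OF h] del: K.retraction_simps(3-6))
next
  fix \<alpha> assume "\<alpha> \<in> arr2 A"
  then show "fmap2 (bm_comp B lift K) \<alpha> = fmap2 F \<alpha>"
    by (simp add: bm_comp_def)
next
  fix f g assume fg: "f \<in> arr1 A" "g \<in> arr1 A" "src1 A g = tgt1 A f"
  have h: "vcomp B (fmap2 F (fmap2 K.retraction (fcmp K g f))) (fmap2 F (fcmp K.retraction (fmap1 K g) (fmap1 K f))) =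
      vid B (fmap1 F (hcomp1 A g f))"
    by (rule F.fmap2_vcomp_eq_vid[OF K.retraction_comp_fcmp[OF fg]])
      (use fg in \<open>simp_all del: K.retraction_simps(3-6)\<close>)
  show "fcmp (bm_comp B lift K) g f = fcmp F g f"
    using fg by (simp add: bm_comp_def F.Y.vcomp_reassoc[OF h] del: K.retraction_simps(3-6))
qed

lemma G_comp_lift: "bm_eq D (bm_comp C G lift) H"
  unfolding bm_eq_def
proof (intro conjI ballI impI)
  fix y assume y: "y \<in> obj D"
  have "fmap0 G (fmap0 F (K.retr0 y)) = fmap0 H (fmap0 K (K.retr0 y))"
    using y by simp
  then show "fmap0 (bm_comp C G lift) y = fmap0 H y"
    using y by (simp add: bm_comp_def)
  show "funit (bm_comp C G lift) y = funit H y"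
    using y square_commutes_funit[of "K.retr0 y"] by (simp add: bm_comp_def)
next
  fix d assume d: "d \<in> arr1 D"
  show "fmap1 (bm_comp C G lift) d = fmap1 H d"
    using d by (simp add: bm_comp_def)
  show "finv (bm_comp C G lift) d = finv H d"
    using d G.Y.vcomp_reassoc[OF square_commutes_finv[of "K.retr1 d"]] G.finv_nat[of "lift_cell d", symmetric]
      G.Y.vcomp_reassoc[OF H.finv_nat[of "vinv D (K.retr_cell d)", symmetric]]
    by (simp add: bm_comp_def G.Y.vinv_inv2[symmetric])
next
  fix \<delta> assume "\<delta> \<in> arr2 D"
  then show "fmap2 (bm_comp C G lift) \<delta> = fmap2 H \<delta>"
    by (simp add: bm_comp_def)
next
  fix f g assume f: "f \<in> arr1 D" and g: "g \<in> arr1 D" and gf: "src1 D g = tgt1 D f"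
  show "fcmp (bm_comp C G lift) g f = fcmp H g f"
    using f g gf G.fcmp_nat[of "lift_cell f" "lift_cell g", symmetric]
      G.Y.vcomp_reassoc[OF square_commutes_fcmp[of "K.retr1 f" "K.retr1 g"]]
      G.Y.vcomp_reassoc[OF H.fcmp_nat[of "vinv D (K.retr_cell f)" "vinv D (K.retr_cell g)", symmetric]]
    by (simp add: bm_comp_def G.Y.interchange[symmetric])
qed

end

theorem lemma5p5:
  fixes A :: "('oa,'aa,'ca) bigroupoid"
    and B :: "('ob,'ab,'cb) bigroupoid"
    and C :: "('oc,'ac,'cc) bigroupoid"
    and D :: "('od,'ad,'cd) bigroupoid"
    and F :: "('oa,'aa,'ca,'ob,'ab,'cb) bimorph"
    and K :: "('oa,'aa,'ca,'od,'ad,'cd) bimorph"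
    and G :: "('ob,'ab,'cb,'oc,'ac,'cc) bimorph"
    and H :: "('od,'ad,'cd,'oc,'ac,'cc) bimorph"
  assumes "bimorphism A B F" and "bimorphism A D K"
    and "bimorphism B C G" and "bimorphism D C H"
    and "bm_eq A (bm_comp C G F) (bm_comp C H K)"
    and "trivial_cofibration A D K"
    and "fmap0 K ` obj A = obj D"
    and "fibration B C G"
  shows "\<exists>L :: ('od,'ad,'cd,'ob,'ab,'cb) bimorph.
           bimorphism D B L \<and>
           bm_eq A (bm_comp B L K) F \<and>
           bm_eq D (bm_comp C G L) H"
proof -
  interpret lifting_problem A B C D F G H K
    using assms by (intro lifting_problem.intro lifting_problem_axioms.intro bgpd_morphismI
        surj_trivial_cofibration.intro surj_trivial_cofibration_axioms.intro)
  show ?thesis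
    using bimorphism_lift lift_comp_K G_comp_lift by blast
qed

end
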